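(* Let $\mathcal{E}$ be a right exact category and let $\mathcal{A}\subseteq\mathcal{E}$ be a right percolating subcategory. (1) The category $\mathrm{C}^b(\mathcal{E})$ of bounded cochain complexes has a natural right exact structure, in which a sequence of chain maps is a conflation iff it is a conflation in $\mathcal{E}$ in each degree. (2) With this structure, $\mathrm{C}^b(\mathcal{A})$ is a right percolating subcategory of $\mathrm{C}^b(\mathcal{E})$.
   Context: A conflation category is an additive category with a class of kernel-cokernel pairs (conflations; kernel part = inflation $\rightarrowtail$, cokernel part = deflation $\twoheadrightarrow$) closed under isomorphism. It is right exact if $1_0$ is a deflation, deflations compose, and pullbacks of deflations along arbitrary morphisms exist and are deflations. A non-empty full subcategory $\mathcal{A}$ of a conflation category $\mathcal{E}$ is right percolating if: (P1) for every conflation $A'\rightarrowtail A\twoheadrightarrow A''$, $A\in\mathcal{A}$ iff $A',A''\in\mathcal{A}$; (P2) every morphism $C\to A$ with $A\in\mathcal{A}$ factors as a deflation $C\twoheadrightarrow A'$ with $A'\in\mathcal{A}$ followed by a morphism $A'\to A$; (P3) for an inflation $C\rightarrowtail D$ and a deflation $C\twoheadrightarrow A$ with $A\in\mathcal{A}$, the pushout exists and the induced maps $A\to P$, $D\to P$ are an inflation and a deflation respectively; (P4) for every inflation $A\rightarrowtail X$ and deflation $X\twoheadrightarrow B$ with $A,B\in\mathcal{A}$ there are $A',B'\in\mathcal{A}$, deflations $A\twoheadrightarrow A'$, $X\twoheadrightarrow B'$, an inflation $A'\rightarrowtail B'$ and a morphism $B'\to B$ with $A\rightarrowtail X\twoheadrightarrow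 B'$ equal to $A\twoheadrightarrow A'\rightarrowtail B'$ and $X\twoheadrightarrow B$ equal to $X\twoheadrightarrow B'\to B$. *)

theory Defs
  imports Main
begin

text \<open>A category is given by a set of objects, a set of arrows, source/target,
identities and composition (cmp g f = g after f).\<close>

record ('o, 'm) category =
  obj   :: "'o set"
  arr   :: "'m set"
  src   :: "'m \<Rightarrow> 'o"
  tgt   :: "'m \<Rightarrow> 'o"
  ident :: "'o \<Rightarrow> 'm"
  cmp   :: "'m \<Rightarrow> 'm \<Rightarrow> 'm"
  addm  :: "'m \<Rightarrow> 'm \<Rightarrow> 'm"
  zro   :: "'o \<Rightarrow> 'o \<Rightarrow> 'm"

definition hom :: "('o, 'm) category \<Rightarrow> 'o \<Rightarrow> 'o \<Rightarrow> 'm set" where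
  "hom C a b = {f \<in> arr C. src C f = a \<and> tgt C f = b}"

definition is_category :: "('o, 'm) category \<Rightarrow> bool" where
  "is_category C \<longleftrightarrow>
     (\<forall>f\<in>arr C. src C f \<in> obj C \<and> tgt C f \<in> obj C) \<and>
     (\<forall>a\<in>obj C. ident C a \<in> hom C a a) \<and>
     (\<forall>a b c f g. f \<in> hom C a b \<longrightarrow> g \<in> hom C b c \<longrightarrow> cmp C g f \<in> hom C a c) \<and>
     (\<forall>a b f. f \<in> hom C a b \<longrightarrow> cmp C f (ident C a) = f \<and> cmp C (ident C b) f = f) \<and>
     (\<forall>a b c d f g h. f \<in> hom C a b \<longrightarrow> g \<in> hom C b c \<longrightarrow> h \<in> hom C c d \<longrightarrow>
        cmp C h (cmp C g f) = cmp C (cmp C h g) f)"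

definition preadditive :: "('o, 'm) category \<Rightarrow> bool" where
  "preadditive C \<longleftrightarrow> is_category C \<and>
     (\<forall>a\<in>obj C. \<forall>b\<in>obj C. zro C a b \<in> hom C a b) \<and>
     (\<forall>a b f g. f \<in> hom C a b \<longrightarrow> g \<in> hom C a b \<longrightarrow>
        addm C f g \<in> hom C a b \<and> addm C f g = addm C g f) \<and>
     (\<forall>a b f g h. f \<in> hom C a b \<longrightarrow> g \<in> hom C a b \<longrightarrow> h \<in> hom C a b \<longrightarrow>
        addm C (addm C f g) h = addm C f (addm C g h)) \<and>
     (\<forall>a b f. f \<in> hom C a b \<longrightarrow> addm C f (zro C a b) = f) \<and>
     (\<forall>a b f. f \<in> hom C a b \<longrightarrow> (\<exists>g\<in>hom C a b. addm C f g = zro C a b)) \<and>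
     (\<forall>a b c f g h. f \<in> hom C a b \<longrightarrow> g \<in> hom C a b \<longrightarrow> h \<in> hom C b c \<longrightarrow>
        cmp C h (addm C f g) = addm C (cmp C h f) (cmp C h g)) \<and>
     (\<forall>a b c f g h. f \<in> hom C a b \<longrightarrow> g \<in> hom C b c \<longrightarrow> h \<in> hom C b c \<longrightarrow>
        cmp C (addm C g h) f = addm C (cmp C g f) (cmp C h f))"

definition is_zero_obj :: "('o, 'm) category \<Rightarrow> 'o \<Rightarrow> bool" where
  "is_zero_obj C z \<longleftrightarrow> z \<in> obj C \<and>
     (\<forall>a\<in>obj C. (\<exists>!f. f \<in> hom C z a) \<and> (\<exists>!f. f \<in> hom C a z))"

definition has_biproducts :: "('o, 'm) category \<Rightarrow> bool" where
  "has_biproducts C \<longleftrightarrow>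
     (\<forall>a\<in>obj C. \<forall>b\<in>obj C. \<exists>c\<in>obj C. \<exists>p1 p2 i1 i2.
        p1 \<in> hom C c a \<and> p2 \<in> hom C c b \<and> i1 \<in> hom C a c \<and> i2 \<in> hom C b c \<and>
        cmp C p1 i1 = ident C a \<and> cmp C p2 i2 = ident C b \<and>
        cmp C p1 i2 = zro C b a \<and> cmp C p2 i1 = zro C a b \<and>
        addm C (cmp C i1 p1) (cmp C i2 p2) = ident C c)"

definition additive_category :: "('o, 'm) category \<Rightarrow> bool" where
  "additive_category C \<longleftrightarrow> preadditive C \<and> (\<exists>z. is_zero_obj C z) \<and> has_biproducts C"

definition is_iso :: "('o, 'm) category \<Rightarrow> 'm \<Rightarrow> bool" where
  "is_iso C u \<longleftrightarrow> u \<in> arr C \<and>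
     (\<exists>v\<in>hom C (tgt C u) (src C u). cmp C v u = ident C (src C u) \<and> cmp C u v = ident C (tgt C u))"

definition is_kernel :: "('o, 'm) category \<Rightarrow> 'm \<Rightarrow> 'm \<Rightarrow> bool" where
  "is_kernel C f g \<longleftrightarrow> f \<in> arr C \<and> g \<in> arr C \<and> tgt C f = src C g \<and>
     cmp C g f = zro C (src C f) (tgt C g) \<and>
     (\<forall>h. h \<in> arr C \<and> tgt C h = src C g \<and> cmp C g h = zro C (src C h) (tgt C g) \<longrightarrow>
        (\<exists>!u. u \<in> hom C (src C h) (src C f) \<and> cmp C f u = h))"

definition is_cokernel :: "('o, 'm) category \<Rightarrow> 'm \<Rightarrow> 'm \<Rightarrow> bool" where
  "is_cokernel C g f \<longleftrightarrow> f \<in> arr C \<and> g \<in> arr C \<and> tgt C f = src C g \<and>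
     cmp C g f = zro C (src C f) (tgt C g) \<and>
     (\<forall>h. h \<in> arr C \<and> src C h = tgt C f \<and> cmp C h f = zro C (src C f) (tgt C h) \<longrightarrow>
        (\<exists>!u. u \<in> hom C (tgt C g) (tgt C h) \<and> cmp C u g = h))"

definition kernel_cokernel_pair :: "('o, 'm) category \<Rightarrow> 'm \<Rightarrow> 'm \<Rightarrow> bool" where
  "kernel_cokernel_pair C f g \<longleftrightarrow> is_kernel C f g \<and> is_cokernel C g f"

definition conflation_category :: "('o, 'm) category \<Rightarrow> ('m \<times> 'm) set \<Rightarrow> bool" where
  "conflation_category C Conf \<longleftrightarrow> additive_category C \<and>
     (\<forall>f g. (f, g) \<in> Conf \<longrightarrow> kernel_cokernel_pair C f g) \<and>
     (\<forall>f g f' g' a b c. (f, g) \<in> Conf \<longrightarrow> f' \<in> arr C \<longrightarrow> g' \<in> arr C \<longrightarrow> tgt C f' = src C g' \<longrightarrow>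
        a \<in> hom C (src C f) (src C f') \<longrightarrow> b \<in> hom C (tgt C f) (tgt C f') \<longrightarrow>
        c \<in> hom C (tgt C g) (tgt C g') \<longrightarrow> is_iso C a \<longrightarrow> is_iso C b \<longrightarrow> is_iso C c \<longrightarrow>
        cmp C b f = cmp C f' a \<longrightarrow> cmp C c g = cmp C g' b \<longrightarrow> (f', g') \<in> Conf)"

definition inflation :: "('o, 'm) category \<Rightarrow> ('m \<times> 'm) set \<Rightarrow> 'm \<Rightarrow> bool" where
  "inflation C Conf f \<longleftrightarrow> (\<exists>g. (f, g) \<in> Conf)"

definition deflation :: "('o, 'm) category \<Rightarrow> ('m \<times> 'm) set \<Rightarrow> 'm \<Rightarrow> bool" where
  "deflation C Conf g \<longleftrightarrow> (\<exists>f. (f, g) \<in> Conf)"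

definition is_pullback :: "('o, 'm) category \<Rightarrow> 'm \<Rightarrow> 'm \<Rightarrow> 'm \<Rightarrow> 'm \<Rightarrow> bool" where
  "is_pullback C g t p g' \<longleftrightarrow> g \<in> arr C \<and> t \<in> arr C \<and> tgt C t = tgt C g \<and>
     p \<in> arr C \<and> g' \<in> arr C \<and> src C p = src C g' \<and> tgt C p = src C g \<and> tgt C g' = src C t \<and>
     cmp C g p = cmp C t g' \<and>
     (\<forall>u v. u \<in> arr C \<and> v \<in> arr C \<and> src C u = src C v \<and> tgt C u = src C g \<and> tgt C v = src C t \<and>
        cmp C g u = cmp C t v \<longrightarrow>
        (\<exists>!w. w \<in> hom C (src C u) (src C p) \<and> cmp C p w = u \<and> cmp C g' w = v))"

definition is_pushout :: "('o, 'm) category \<Rightarrow> 'm \<Rightarrow> 'm \<Rightarrow> 'm \<Rightarrow> 'm \<Rightarrow> bool" where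
  "is_pushout C i q q' i' \<longleftrightarrow> i \<in> arr C \<and> q \<in> arr C \<and> src C i = src C q \<and>
     q' \<in> arr C \<and> i' \<in> arr C \<and> src C q' = tgt C i \<and> src C i' = tgt C q \<and> tgt C q' = tgt C i' \<and>
     cmp C q' i = cmp C i' q \<and>
     (\<forall>u v. u \<in> arr C \<and> v \<in> arr C \<and> src C u = tgt C i \<and> src C v = tgt C q \<and> tgt C u = tgt C v \<and>
        cmp C u i = cmp C v q \<longrightarrow>
        (\<exists>!w. w \<in> hom C (tgt C q') (tgt C u) \<and> cmp C w q' = u \<and> cmp C w i' = v))"

definition right_exact :: "('o, 'm) category \<Rightarrow> ('m \<times> 'm) set \<Rightarrow> bool" where
  "right_exact C Conf \<longleftrightarrow> conflation_category C Conf \<and>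
     (\<forall>z. is_zero_obj C z \<longrightarrow> deflation C Conf (ident C z)) \<and>
     (\<forall>g h. deflation C Conf g \<longrightarrow> deflation C Conf h \<longrightarrow> tgt C g = src C h \<longrightarrow>
        deflation C Conf (cmp C h g)) \<and>
     (\<forall>g t. deflation C Conf g \<longrightarrow> t \<in> arr C \<longrightarrow> tgt C t = tgt C g \<longrightarrow>
        (\<exists>p g'. is_pullback C g t p g') \<and>
        (\<forall>p g'. is_pullback C g t p g' \<longrightarrow> deflation C Conf g'))"

text \<open>Right percolating subcategory (a full subcategory, given by its set of objects).\<close>

definition right_percolating :: "('o, 'm) category \<Rightarrow> ('m \<times> 'm) set \<Rightarrow> 'o set \<Rightarrow> bool" where
  "right_percolating C Conf A \<longleftrightarrow> A \<noteq> {} \<and> A \<subseteq> obj C \<and>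
     \<comment> \<open>P1\<close>
     (\<forall>f g. (f, g) \<in> Conf \<longrightarrow> (src C g \<in> A \<longleftrightarrow> src C f \<in> A \<and> tgt C g \<in> A)) \<and>
     \<comment> \<open>P2\<close>
     (\<forall>h. h \<in> arr C \<longrightarrow> tgt C h \<in> A \<longrightarrow>
        (\<exists>A' d k. A' \<in> A \<and> d \<in> hom C (src C h) A' \<and> deflation C Conf d \<and>
                  k \<in> hom C A' (tgt C h) \<and> h = cmp C k d)) \<and>
     \<comment> \<open>P3\<close>
     (\<forall>i q. inflation C Conf i \<longrightarrow> deflation C Conf q \<longrightarrow> src C i = src C q \<longrightarrow> tgt C q \<in> A \<longrightarrow>
        (\<exists>q' i'. is_pushout C i q q' i') \<and>
        (\<forall>q' i'. is_pushout C i q q' i' \<longrightarrow> inflation C Conf i' \<and> deflation C Conf q')) \<and>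
     \<comment> \<open>P4\<close>
     (\<forall>i p. inflation C Conf i \<longrightarrow> deflation C Conf p \<longrightarrow> tgt C i = src C p \<longrightarrow>
        src C i \<in> A \<longrightarrow> tgt C p \<in> A \<longrightarrow>
        (\<exists>A' B' d1 d2 j k. A' \<in> A \<and> B' \<in> A \<and>
           d1 \<in> hom C (src C i) A' \<and> deflation C Conf d1 \<and>
           d2 \<in> hom C (tgt C i) B' \<and> deflation C Conf d2 \<and>
           j \<in> hom C A' B' \<and> inflation C Conf j \<and>
           k \<in> hom C B' (tgt C p) \<and>
           cmp C d2 i = cmp C j d1 \<and> p = cmp C k d2))"

text \<open>A complex is a pair (X, d) of objects X n and differentials d n : X n \<rightarrow> X (n+1).
  A chain map is a triple (source complex, target complex, components).\<close>

type_synonym ('o, 'm) cx = "(int \<Rightarrow> 'o) \<times> (int \<Rightarrow> 'm)"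
type_synonym ('o, 'm) chmap = "('o, 'm) cx \<times> ('o, 'm) cx \<times> (int \<Rightarrow> 'm)"

definition is_bcomplex :: "('o, 'm) category \<Rightarrow> ('o, 'm) cx \<Rightarrow> bool" where
  "is_bcomplex E x \<longleftrightarrow>
     (\<forall>n. fst x n \<in> obj E \<and> snd x n \<in> hom E (fst x n) (fst x (n + 1)) \<and>
          cmp E (snd x (n + 1)) (snd x n) = zro E (fst x n) (fst x (n + 2))) \<and>
     (\<exists>N::int. \<forall>n. N < \<bar>n\<bar> \<longrightarrow> is_zero_obj E (fst x n))"

definition is_chain_map :: "('o, 'm) category \<Rightarrow> ('o, 'm) cx \<Rightarrow> ('o, 'm) cx \<Rightarrow> (int \<Rightarrow> 'm) \<Rightarrow> bool" where
  "is_chain_map E S T f \<longleftrightarrow> is_bcomplex E S \<and> is_bcomplex E T \<and>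
     (\<forall>n. f n \<in> hom E (fst S n) (fst T n) \<and>
          cmp E (snd T n) (f n) = cmp E (f (n + 1)) (snd S n))"

definition Cb :: "('o, 'm) category \<Rightarrow> (('o, 'm) cx, ('o, 'm) chmap) category" where
  "Cb E = \<lparr> obj = {x. is_bcomplex E x},
            arr = {m. is_chain_map E (fst m) (fst (snd m)) (snd (snd m))},
            src = (\<lambda>m. fst m),
            tgt = (\<lambda>m. fst (snd m)),
            ident = (\<lambda>x. (x, x, \<lambda>n. ident E (fst x n))),
            cmp = (\<lambda>g f. (fst f, fst (snd g), \<lambda>n. cmp E (snd (snd g) n) (snd (snd f) n))),
            addm = (\<lambda>f g. (fst f, fst (snd f), \<lambda>n. addm E (snd (snd f) n) (snd (snd g) n))),
            zro = (\<lambda>x y. (x, y, \<lambda>n. zro E (fst x n) (fst y n))) \<rparr>"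

definition Cb_conf :: "('o, 'm) category \<Rightarrow> ('m \<times> 'm) set \<Rightarrow> (('o, 'm) chmap \<times> ('o, 'm) chmap) set" where
  "Cb_conf E Conf = {(f, g). f \<in> arr (Cb E) \<and> g \<in> arr (Cb E) \<and> tgt (Cb E) f = src (Cb E) g \<and>
                      (\<forall>n. (snd (snd f) n, snd (snd g) n) \<in> Conf)}"

definition Cb_sub :: "('o, 'm) category \<Rightarrow> 'o set \<Rightarrow> ('o, 'm) cx set" where
  "Cb_sub E A = {x \<in> obj (Cb E). \<forall>n. fst x n \<in> A}"

end

theory Submission
  imports Defs
begin

(* Everything on C^b(E) is computed degreewise in E: chain maps form a kernel, a cokernel, a
   pullback or a pushout square as soon as they do so in every degree. The differentials of a
   degreewise constructed complex are induced by universal properties; they square to zero, and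
   the structure maps are chain maps, because the legs of a pullback, pushout, kernel, cokernel
   or biproduct are jointly monic or jointly epic. This gives the right exact structure on
   C^b(E) and the axioms P1 and P3 for C^b(A).

   For P2 and P4 one needs degreewise deflations onto objects of A that are compatible with the
   differentials. They are built by downward recursion on the degree: above the support of the
   bounded complex the identity of a zero object (which lies in A) will do, and a choice in
   degree n + 1 is extended to degree n by a deflation onto A through which both the given map
   and the composite with the differential factor. Two maps into A out of the same object always
   factor through a common deflation onto A: refine one deflation by pushing its kernel out
   along a deflation onto A; the pushout has the same cokernel, so by P1 it lies in A. *)

lemma hom_iff [simp]: "f \<in> hom C a b \<longleftrightarrow> f \<in> arr C \<and> src C f = a \<and> tgt C f = b"
  by (simp add: hom_def)

(* Normal form for degree shifts: simp would otherwise turn n + 1 + 1 into 2 + n, which does not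
   match the n + 2 in is_bcomplex_def. *)
lemma int_add_one_one [simp]: "(n::int) + 1 + 1 = n + 2"
  by simp

lemma ex1_eq: "\<exists>!x. P x \<Longrightarrow> P a \<Longrightarrow> P b \<Longrightarrow> a = b"
  by blast

lemma int_downward_choice:
  fixes N :: int
  assumes base: "\<And>n. N < n \<Longrightarrow> G n (b n) \<and> R n (b n) (b (n + 1))"
    and step: "\<And>n y. n \<le> N \<Longrightarrow> G (n + 1) y \<Longrightarrow> \<exists>x. G n x \<and> R n x y"
  obtains e where "\<And>n. G n (e n)" "\<And>n. R n (e n) (e (n + 1))"
proof -
  define S where "S n y = (SOME x. G n x \<and> R n x y)" for n y
  have S: "G n (S n y) \<and> R n (S n y) y" if "n \<le> N" "G (n + 1) y" for n y
    unfolding S_def using step[OF that] by (rule someI_ex)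
  define r where "r = rec_nat (b (N + 1)) (\<lambda>k y. S (N - int k) y)"
  have r0: "r 0 = b (N + 1)" and rS: "r (Suc k) = S (N - int k) (r k)" for k
    by (simp_all add: r_def)
  have G: "G (N + 1 - int k) (r k)" for k
  proof (induction k)
    case 0
    then show ?case using base[of "N + 1"] r0 by simp
  next
    case (Suc k)
    then have "G (N - int k + 1) (r k)" by (simp add: algebra_simps)
    then show ?case using S[of "N - int k" "r k"] rS by (simp add: algebra_simps)
  qed
  define e where "e n = (if N < n then b n else r (nat (N + 1 - n)))" for n
  have "G n (e n) \<and> R n (e n) (e (n + 1))" for n
  proof (cases "N < n")
    case True
    then show ?thesis using base[of n] by (simp add: e_def)
  next
    case False
    define k where "k = nat (N - n)"
    have en: "e n = S n (r k)" using False rS[of k] by (simp add: e_def k_def Suc_nat_eq_nat_zadd1 algebra_simps)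
    have en1: "e (n + 1) = r k" using False r0 by (auto simp: e_def k_def)
    have "G (n + 1) (r k)" using G[of k] False by (simp add: k_def algebra_simps)
    then show ?thesis using S[of n "r k"] False en en1 by simp
  qed
  then show thesis using that by blast
qed

definition jointly_monic :: "('o, 'm) category \<Rightarrow> 'm \<Rightarrow> 'm \<Rightarrow> bool" where
  "jointly_monic C f g \<longleftrightarrow>
     (\<forall>u v. u \<in> arr C \<longrightarrow> v \<in> arr C \<longrightarrow> src C u = src C v \<longrightarrow> tgt C u = src C f \<longrightarrow>
        tgt C v = src C f \<longrightarrow> cmp C f u = cmp C f v \<longrightarrow> cmp C g u = cmp C g v \<longrightarrow> u = v)"

definition jointly_epic :: "('o, 'm) category \<Rightarrow> 'm \<Rightarrow> 'm \<Rightarrow> bool" where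
  "jointly_epic C f g \<longleftrightarrow>
     (\<forall>u v. u \<in> arr C \<longrightarrow> v \<in> arr C \<longrightarrow> tgt C u = tgt C v \<longrightarrow> src C u = tgt C f \<longrightarrow>
        src C v = tgt C f \<longrightarrow> cmp C u f = cmp C v f \<longrightarrow> cmp C u g = cmp C v g \<longrightarrow> u = v)"

abbreviation monic :: "('o, 'm) category \<Rightarrow> 'm \<Rightarrow> bool" where
  "monic C f \<equiv> jointly_monic C f f"

abbreviation epic :: "('o, 'm) category \<Rightarrow> 'm \<Rightarrow> bool" where
  "epic C f \<equiv> jointly_epic C f f"

lemma jointly_monicD:
  "jointly_monic C f g \<Longrightarrow> u \<in> arr C \<Longrightarrow> v \<in> arr C \<Longrightarrow> src C u = src C v \<Longrightarrow>
   tgt C u = src C f \<Longrightarrow> tgt C v = src C f \<Longrightarrow> cmp C f u = cmp C f v \<Longrightarrow> cmp C g u = cmp C g v \<Longrightarrow>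
   u = v"
  unfolding jointly_monic_def by blast

lemma jointly_epicD:
  "jointly_epic C f g \<Longrightarrow> u \<in> arr C \<Longrightarrow> v \<in> arr C \<Longrightarrow> tgt C u = tgt C v \<Longrightarrow>
   src C u = tgt C f \<Longrightarrow> src C v = tgt C f \<Longrightarrow> cmp C u f = cmp C v f \<Longrightarrow> cmp C u g = cmp C v g \<Longrightarrow>
   u = v"
  unfolding jointly_epic_def by blast

definition factors_through :: "('o, 'm) category \<Rightarrow> 'm \<Rightarrow> 'm \<Rightarrow> bool" where
  "factors_through C h e \<longleftrightarrow> (\<exists>k. k \<in> hom C (tgt C e) (tgt C h) \<and> h = cmp C k e)"

definition is_biproduct :: "('o, 'm) category \<Rightarrow> 'o \<Rightarrow> 'o \<Rightarrow> 'o \<Rightarrow> 'm \<Rightarrow> 'm \<Rightarrow> 'm \<Rightarrow> 'm \<Rightarrow> bool" where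
  "is_biproduct C a b c p1 p2 i1 i2 \<longleftrightarrow> c \<in> obj C \<and>
     p1 \<in> hom C c a \<and> p2 \<in> hom C c b \<and> i1 \<in> hom C a c \<and> i2 \<in> hom C b c \<and>
     cmp C p1 i1 = ident C a \<and> cmp C p2 i2 = ident C b \<and>
     cmp C p1 i2 = zro C b a \<and> cmp C p2 i1 = zro C a b \<and>
     addm C (cmp C i1 p1) (cmp C i2 p2) = ident C c"

lemma has_biproducts_iff:
  "has_biproducts C \<longleftrightarrow> (\<forall>a\<in>obj C. \<forall>b\<in>obj C. \<exists>c p1 p2 i1 i2. is_biproduct C a b c p1 p2 i1 i2)"
  unfolding has_biproducts_def is_biproduct_def by blast

locale cat =
  fixes C :: "('o, 'm) category"
  assumes is_category: "is_category C"
begin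

lemma arr_src_obj [simp]: "f \<in> arr C \<Longrightarrow> src C f \<in> obj C"
  and arr_tgt_obj [simp]: "f \<in> arr C \<Longrightarrow> tgt C f \<in> obj C"
  using is_category by (simp_all add: is_category_def)

lemma ident_arr [simp]: "a \<in> obj C \<Longrightarrow> ident C a \<in> arr C"
  and ident_src [simp]: "a \<in> obj C \<Longrightarrow> src C (ident C a) = a"
  and ident_tgt [simp]: "a \<in> obj C \<Longrightarrow> tgt C (ident C a) = a"
  using is_category by (simp_all add: is_category_def)

lemma comp_arr [simp]: "f \<in> arr C \<Longrightarrow> g \<in> arr C \<Longrightarrow> tgt C f = src C g \<Longrightarrow> cmp C g f \<in> arr C"
  and comp_src [simp]: "f \<in> arr C \<Longrightarrow> g \<in> arr C \<Longrightarrow> tgt C f = src C g \<Longrightarrow> src C (cmp C g f) = src C f"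
  and comp_tgt [simp]: "f \<in> arr C \<Longrightarrow> g \<in> arr C \<Longrightarrow> tgt C f = src C g \<Longrightarrow> tgt C (cmp C g f) = tgt C g"
  using is_category unfolding is_category_def hom_iff by metis+

lemma comp_ident_left [simp]: "f \<in> arr C \<Longrightarrow> tgt C f = b \<Longrightarrow> cmp C (ident C b) f = f"
  and comp_ident_right [simp]: "f \<in> arr C \<Longrightarrow> src C f = a \<Longrightarrow> cmp C f (ident C a) = f"
  using is_category unfolding is_category_def hom_iff by metis+

lemma comp_assoc:
  "f \<in> arr C \<Longrightarrow> g \<in> arr C \<Longrightarrow> h \<in> arr C \<Longrightarrow> tgt C f = src C g \<Longrightarrow> tgt C g = src C h \<Longrightarrow>
   cmp C (cmp C h g) f = cmp C h (cmp C g f)"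
  using is_category unfolding is_category_def hom_iff by metis

lemma iso_intro:
  "u \<in> arr C \<Longrightarrow> v \<in> arr C \<Longrightarrow> src C v = tgt C u \<Longrightarrow> tgt C v = src C u \<Longrightarrow>
   cmp C v u = ident C (src C u) \<Longrightarrow> cmp C u v = ident C (tgt C u) \<Longrightarrow> is_iso C u"
  unfolding is_iso_def by auto

lemma ident_iso: "a \<in> obj C \<Longrightarrow> is_iso C (ident C a)"
  unfolding is_iso_def by (intro conjI bexI[of _ "ident C a"]) simp_all

lemma pullback_square:
  "is_pullback C g t p q \<Longrightarrow> g \<in> arr C \<and> t \<in> arr C \<and> p \<in> arr C \<and> q \<in> arr C \<and>
     src C q = src C p \<and> tgt C p = src C g \<and> tgt C q = src C t \<and> tgt C t = tgt C g \<and>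
     cmp C g p = cmp C t q"
  unfolding is_pullback_def by auto

lemma pullback_factor:
  assumes "is_pullback C g t p q" and "u \<in> arr C" "v \<in> arr C" "src C v = src C u"
    and "tgt C u = src C g" "tgt C v = src C t" "cmp C g u = cmp C t v"
  obtains w where "w \<in> arr C" "src C w = src C u" "tgt C w = src C p" "cmp C p w = u" "cmp C q w = v"
  using assms unfolding is_pullback_def hom_iff by metis

lemma pullback_jointly_monic:
  assumes pb: "is_pullback C g t p q" shows "jointly_monic C p q"
  unfolding jointly_monic_def
proof (intro allI impI)
  fix u v
  assume u: "u \<in> arr C" "tgt C u = src C p" and v: "v \<in> arr C" "tgt C v = src C p"
    and uv: "src C u = src C v" and p: "cmp C p u = cmp C p v" and q: "cmp C q u = cmp C q v"
  note sq = pullback_square[OF pb]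
  have "cmp C g (cmp C p u) = cmp C t (cmp C q u)"
    using sq u by (metis comp_assoc)
  moreover have univ: "\<And>a b. a \<in> arr C \<Longrightarrow> b \<in> arr C \<Longrightarrow> src C a = src C b \<Longrightarrow> tgt C a = src C g \<Longrightarrow>
      tgt C b = src C t \<Longrightarrow> cmp C g a = cmp C t b \<Longrightarrow>
      \<exists>!w. w \<in> hom C (src C a) (src C p) \<and> cmp C p w = a \<and> cmp C q w = b"
    using pb unfolding is_pullback_def by blast
  ultimately have "\<exists>!w. w \<in> hom C (src C u) (src C p) \<and> cmp C p w = cmp C p u \<and> cmp C q w = cmp C q u"
    using univ[of "cmp C p u" "cmp C q u"] sq u by simp
  then show "u = v" using u v uv p q by auto
qed

lemma pullback_unique_iso:
  assumes pb: "is_pullback C g t p q" and pb0: "is_pullback C g t p0 q0"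
  obtains w where "is_iso C w" "w \<in> arr C" "src C w = src C p" "tgt C w = src C p0"
    "cmp C p0 w = p" "cmp C q0 w = q"
proof -
  note sq = pullback_square[OF pb] and sq0 = pullback_square[OF pb0]
  obtain w where w: "w \<in> arr C" "src C w = src C p" "tgt C w = src C p0" "cmp C p0 w = p" "cmp C q0 w = q"
    using pullback_factor[OF pb0, of p q] sq by metis
  obtain w' where w': "w' \<in> arr C" "src C w' = src C p0" "tgt C w' = src C p" "cmp C p w' = p0" "cmp C q w' = q0"
    using pullback_factor[OF pb, of p0 q0] sq0 by metis
  have "cmp C w' w = ident C (src C p)"
    by (rule jointly_monicD[OF pullback_jointly_monic[OF pb]])
      (use w w' sq in \<open>simp_all add: comp_assoc[symmetric]\<close>)
  moreover have "cmp C w w' = ident C (src C p0)"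
    by (rule jointly_monicD[OF pullback_jointly_monic[OF pb0]])
      (use w w' sq0 in \<open>simp_all add: comp_assoc[symmetric]\<close>)
  ultimately show thesis
    using that iso_intro[of w w'] w w' by simp
qed

lemma pushout_square:
  "is_pushout C i q q' i' \<Longrightarrow> i \<in> arr C \<and> q \<in> arr C \<and> q' \<in> arr C \<and> i' \<in> arr C \<and>
     src C q = src C i \<and> src C q' = tgt C i \<and> src C i' = tgt C q \<and> tgt C i' = tgt C q' \<and>
     cmp C q' i = cmp C i' q"
  unfolding is_pushout_def by auto

lemma pushout_factor:
  assumes "is_pushout C i q q' i'" and "u \<in> arr C" "v \<in> arr C" "tgt C v = tgt C u"
    and "src C u = tgt C i" "src C v = tgt C q" "cmp C u i = cmp C v q"
  obtains w where "w \<in> arr C" "src C w = tgt C q'" "tgt C w = tgt C u" "cmp C w q' = u" "cmp C w i' = v"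
  using assms unfolding is_pushout_def hom_iff by metis

lemma pushout_jointly_epic:
  assumes po: "is_pushout C i q q' i'" shows "jointly_epic C q' i'"
  unfolding jointly_epic_def
proof (intro allI impI)
  fix u v
  assume u: "u \<in> arr C" "src C u = tgt C q'" and v: "v \<in> arr C" "src C v = tgt C q'"
    and uv: "tgt C u = tgt C v" and q': "cmp C u q' = cmp C v q'" and i': "cmp C u i' = cmp C v i'"
  note sq = pushout_square[OF po]
  have "cmp C (cmp C u q') i = cmp C (cmp C u i') q"
    using sq u by (metis comp_assoc)
  moreover have univ: "\<And>a b. a \<in> arr C \<Longrightarrow> b \<in> arr C \<Longrightarrow> src C a = tgt C i \<Longrightarrow> src C b = tgt C q \<Longrightarrow>
      tgt C a = tgt C b \<Longrightarrow> cmp C a i = cmp C b q \<Longrightarrow>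
      \<exists>!w. w \<in> hom C (tgt C q') (tgt C a) \<and> cmp C w q' = a \<and> cmp C w i' = b"
    using po unfolding is_pushout_def by blast
  ultimately have "\<exists>!w. w \<in> hom C (tgt C q') (tgt C u) \<and> cmp C w q' = cmp C u q' \<and> cmp C w i' = cmp C u i'"
    using univ[of "cmp C u q'" "cmp C u i'"] sq u by simp
  then show "u = v" using u v uv q' i' by auto
qed

lemma pushout_unique_iso:
  assumes po: "is_pushout C i q q' i'" and po0: "is_pushout C i q q0 i0"
  obtains w where "is_iso C w" "w \<in> arr C" "src C w = tgt C q0" "tgt C w = tgt C q'"
    "cmp C w q0 = q'" "cmp C w i0 = i'"
proof -
  note sq = pushout_square[OF po] and sq0 = pushout_square[OF po0]
  obtain w where w: "w \<in> arr C" "src C w = tgt C q0" "tgt C w = tgt C q'" "cmp C w q0 = q'" "cmp C w i0 = i'"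
    using pushout_factor[OF po0, of q' i'] sq by metis
  obtain w' where w': "w' \<in> arr C" "src C w' = tgt C q'" "tgt C w' = tgt C q0" "cmp C w' q' = q0" "cmp C w' i' = i0"
    using pushout_factor[OF po, of q0 i0] sq0 by metis
  have "cmp C w' w = ident C (tgt C q0)"
    by (rule jointly_epicD[OF pushout_jointly_epic[OF po0]])
      (use w w' sq0 in \<open>simp_all add: comp_assoc\<close>)
  moreover have "cmp C w w' = ident C (tgt C q')"
    by (rule jointly_epicD[OF pushout_jointly_epic[OF po]])
      (use w w' sq in \<open>simp_all add: comp_assoc\<close>)
  ultimately show thesis
    using that iso_intro[of w w'] w w' by simp
qed

lemma factors_through_trans:
  assumes "factors_through C h e" "factors_through C e d" "d \<in> arr C"
  shows "factors_through C h d"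
proof -
  obtain k l where k: "k \<in> hom C (tgt C e) (tgt C h)" "cmp C k e = h"
    and l: "l \<in> hom C (tgt C d) (tgt C e)" "cmp C l d = e"
    using assms(1,2) unfolding factors_through_def by metis
  have "cmp C k l \<in> hom C (tgt C d) (tgt C h)" using k(1) l(1) by simp
  moreover have "h = cmp C (cmp C k l) d"
    using k l assms(3) by (simp add: comp_assoc)
  ultimately show ?thesis unfolding factors_through_def by blast
qed

lemma kernel_factor:
  assumes "is_kernel C f g" "h \<in> arr C" "tgt C h = src C g" "cmp C g h = zro C (src C h) (tgt C g)"
  obtains u where "u \<in> arr C" "src C u = src C h" "tgt C u = src C f" "cmp C f u = h"
  using assms unfolding is_kernel_def hom_iff by metis

lemma cokernel_factor:
  assumes "is_cokernel C g f" "h \<in> arr C" "src C h = tgt C f" "cmp C h f = zro C (src C f) (tgt C h)"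
  obtains u where "u \<in> arr C" "src C u = tgt C g" "tgt C u = tgt C h" "cmp C u g = h"
  using assms unfolding is_cokernel_def hom_iff by metis

end

locale preadditive_cat =
  fixes C :: "('o, 'm) category"
  assumes preadditive: "preadditive C"
begin

sublocale cat
  using preadditive by unfold_locales (simp add: preadditive_def)

lemma zro_arr [simp]: "a \<in> obj C \<Longrightarrow> b \<in> obj C \<Longrightarrow> zro C a b \<in> arr C"
  and zro_src [simp]: "a \<in> obj C \<Longrightarrow> b \<in> obj C \<Longrightarrow> src C (zro C a b) = a"
  and zro_tgt [simp]: "a \<in> obj C \<Longrightarrow> b \<in> obj C \<Longrightarrow> tgt C (zro C a b) = b"
  using preadditive by (simp_all add: preadditive_def)

lemma add_in_hom: "f \<in> hom C a b \<Longrightarrow> g \<in> hom C a b \<Longrightarrow> addm C f g \<in> hom C a b"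
  using preadditive unfolding preadditive_def by (elim conjE) blast

lemma add_arr [simp]:
    "f \<in> arr C \<Longrightarrow> g \<in> arr C \<Longrightarrow> src C g = src C f \<Longrightarrow> tgt C g = tgt C f \<Longrightarrow> addm C f g \<in> arr C"
  and add_src [simp]:
    "f \<in> arr C \<Longrightarrow> g \<in> arr C \<Longrightarrow> src C g = src C f \<Longrightarrow> tgt C g = tgt C f \<Longrightarrow> src C (addm C f g) = src C f"
  and add_tgt [simp]:
    "f \<in> arr C \<Longrightarrow> g \<in> arr C \<Longrightarrow> src C g = src C f \<Longrightarrow> tgt C g = tgt C f \<Longrightarrow> tgt C (addm C f g) = tgt C f"
  using add_in_hom[of f "src C f" "tgt C f" g] by simp_all

lemma add_commute: "f \<in> hom C a b \<Longrightarrow> g \<in> hom C a b \<Longrightarrow> addm C f g = addm C g f"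
  using preadditive unfolding preadditive_def by (elim conjE) blast

lemma add_assoc:
  "f \<in> hom C a b \<Longrightarrow> g \<in> hom C a b \<Longrightarrow> h \<in> hom C a b \<Longrightarrow> addm C (addm C f g) h = addm C f (addm C g h)"
  using preadditive unfolding preadditive_def by (elim conjE) blast

lemma add_zro_right [simp]: "f \<in> hom C a b \<Longrightarrow> addm C f (zro C a b) = f"
  using preadditive unfolding preadditive_def by (elim conjE) blast

lemma add_zro_left [simp]: assumes "f \<in> hom C a b" shows "addm C (zro C a b) f = f"
proof -
  have "zro C a b \<in> hom C a b" using assms by (metis hom_iff arr_src_obj arr_tgt_obj zro_arr zro_src zro_tgt)
  then show ?thesis using add_commute[OF _ assms] assms by simp
qed

lemma add_inverse:
  assumes "f \<in> hom C a b"
  obtains g where "g \<in> hom C a b" "addm C f g = zro C a b"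
proof -
  have "\<exists>g\<in>hom C a b. addm C f g = zro C a b"
    using preadditive assms unfolding preadditive_def by (elim conjE) blast
  then show thesis using that by blast
qed

lemma comp_add_left:
  "f \<in> hom C a b \<Longrightarrow> g \<in> hom C a b \<Longrightarrow> h \<in> hom C b c \<Longrightarrow>
   cmp C h (addm C f g) = addm C (cmp C h f) (cmp C h g)"
  using preadditive unfolding preadditive_def by (elim conjE) metis

lemma comp_add_right:
  "f \<in> hom C a b \<Longrightarrow> g \<in> hom C b c \<Longrightarrow> h \<in> hom C b c \<Longrightarrow>
   cmp C (addm C g h) f = addm C (cmp C g f) (cmp C h f)"
  using preadditive unfolding preadditive_def by (elim conjE) metis

lemma add_idempotent_zro:
  assumes f: "f \<in> hom C a b" and ff: "addm C f f = f" shows "f = zro C a b"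
proof -
  obtain g where g: "g \<in> hom C a b" "addm C f g = zro C a b"
    using add_inverse[OF f] by blast
  have "zro C a b = addm C (addm C f f) g" using ff g by simp
  also have "\<dots> = f" using add_assoc[OF f f g(1)] f g by simp
  finally show ?thesis by simp
qed

lemma comp_zro_left [simp]:
  assumes f: "f \<in> arr C" "tgt C f = b" and c: "c \<in> obj C"
  shows "cmp C (zro C b c) f = zro C (src C f) c"
proof (rule add_idempotent_zro)
  have z: "zro C b c \<in> hom C b c" using f c by auto
  then show "cmp C (zro C b c) f \<in> hom C (src C f) c" using f by simp
  have "cmp C (zro C b c) f = cmp C (addm C (zro C b c) (zro C b c)) f" using z by simp
  also have "\<dots> = addm C (cmp C (zro C b c) f) (cmp C (zro C b c) f)"
    using comp_add_right[OF _ z z, of f "src C f"] f by simp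
  finally show "addm C (cmp C (zro C b c) f) (cmp C (zro C b c) f) = cmp C (zro C b c) f" ..
qed

lemma comp_zro_right [simp]:
  assumes f: "f \<in> arr C" "src C f = b" and a: "a \<in> obj C"
  shows "cmp C f (zro C a b) = zro C a (tgt C f)"
proof (rule add_idempotent_zro)
  have z: "zro C a b \<in> hom C a b" using f a by auto
  then show "cmp C f (zro C a b) \<in> hom C a (tgt C f)" using f by simp
  have "cmp C f (zro C a b) = cmp C f (addm C (zro C a b) (zro C a b))" using z by simp
  also have "\<dots> = addm C (cmp C f (zro C a b)) (cmp C f (zro C a b))"
    using comp_add_left[OF z z, of f "tgt C f"] f by simp
  finally show "addm C (cmp C f (zro C a b)) (cmp C f (zro C a b)) = cmp C f (zro C a b)" ..
qed

lemma add_inverse_unique: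
  assumes "f \<in> hom C a b" "g \<in> hom C a b" "g' \<in> hom C a b"
    and "addm C f g = zro C a b" "addm C f g' = zro C a b"
  shows "g = g'"
proof -
  have "g = addm C g (addm C f g')" using assms by simp
  also have "\<dots> = addm C (addm C f g) g'" using assms add_assoc[of g a b f g'] add_commute[of f a b g] by simp
  also have "\<dots> = g'" using assms by simp
  finally show ?thesis .
qed

lemma zero_obj_iff: "is_zero_obj C a \<longleftrightarrow> a \<in> obj C \<and> ident C a = zro C a a"
proof
  assume z: "is_zero_obj C a"
  then have a: "a \<in> obj C" and "\<exists>!f. f \<in> hom C a a" unfolding is_zero_obj_def by auto
  then show "a \<in> obj C \<and> ident C a = zro C a a" using ex1_eq[of "\<lambda>f. f \<in> hom C a a"] by simp
next
  assume a: "a \<in> obj C \<and> ident C a = zro C a a"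
  have "f = zro C a b" if "f \<in> hom C a b" for f b
  proof -
    have "f = cmp C f (ident C a)" using that by simp
    also have "\<dots> = zro C a b" using a that by simp
    finally show ?thesis .
  qed
  moreover have "f = zro C b a" if "f \<in> hom C b a" for f b
  proof -
    have "f = cmp C (ident C a) f" using that by simp
    also have "\<dots> = zro C b a" using a that by simp
    finally show ?thesis .
  qed
  ultimately have "\<exists>!f. f \<in> hom C a b" "\<exists>!f. f \<in> hom C b a" if "b \<in> obj C" for b
    using a that by (metis zro_arr zro_src zro_tgt hom_iff)+
  then show "is_zero_obj C a" unfolding is_zero_obj_def using a by blast
qed

lemma arr_from_zero_obj:
  assumes "is_zero_obj C z" "f \<in> arr C" "src C f = z" shows "f = zro C z (tgt C f)"
proof -
  have "f = cmp C f (ident C z)" using assms by simp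
  also have "\<dots> = zro C z (tgt C f)" using assms by (simp add: zero_obj_iff)
  finally show ?thesis .
qed

lemma arr_to_zero_obj:
  assumes "is_zero_obj C z" "f \<in> arr C" "tgt C f = z" shows "f = zro C (src C f) z"
proof -
  have "f = cmp C (ident C z) f" using assms by simp
  also have "\<dots> = zro C (src C f) z" using assms by (simp add: zero_obj_iff)
  finally show ?thesis .
qed

lemma zro_iso: "is_zero_obj C a \<Longrightarrow> is_zero_obj C b \<Longrightarrow> is_iso C (zro C a b)"
  by (intro iso_intro[of _ "zro C b a"]) (simp_all add: zero_obj_iff)

lemma jointly_monic_zero_obj:
  assumes jm: "jointly_monic C f g" and f: "f \<in> arr C" "g \<in> arr C" "src C g = src C f"
    and z: "is_zero_obj C (tgt C f)" "is_zero_obj C (tgt C g)"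
  shows "is_zero_obj C (src C f)"
proof -
  have "zro C (src C f) (tgt C f) = f" "zro C (src C f) (tgt C g) = g"
    by (metis arr_to_zero_obj z f)+
  moreover have "ident C (src C f) = zro C (src C f) (src C f)"
    by (rule jointly_monicD[OF jm]) (use f calculation in simp_all)
  ultimately show ?thesis using f by (simp add: zero_obj_iff)
qed

lemma jointly_epic_zero_obj:
  assumes je: "jointly_epic C f g" and f: "f \<in> arr C" "g \<in> arr C" "tgt C g = tgt C f"
    and z: "is_zero_obj C (src C f)" "is_zero_obj C (src C g)"
  shows "is_zero_obj C (tgt C f)"
proof -
  have "zro C (src C f) (tgt C f) = f" "zro C (src C g) (tgt C f) = g"
    by (metis arr_from_zero_obj z f)+
  moreover have "ident C (tgt C f) = zro C (tgt C f) (tgt C f)"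
    by (rule jointly_epicD[OF je]) (use f calculation in simp_all)
  ultimately show ?thesis using f by (simp add: zero_obj_iff)
qed

lemma kernel_monic: assumes "is_kernel C f g" shows "monic C f"
  unfolding jointly_monic_def
proof (intro allI impI)
  fix u v assume u: "u \<in> arr C" "tgt C u = src C f" and v: "v \<in> arr C" "tgt C v = src C f"
    and uv: "src C u = src C v" and e: "cmp C f u = cmp C f v"
  have f: "f \<in> arr C" "g \<in> arr C" "tgt C f = src C g" "cmp C g f = zro C (src C f) (tgt C g)"
    and univ: "\<And>h. h \<in> arr C \<Longrightarrow> tgt C h = src C g \<Longrightarrow> cmp C g h = zro C (src C h) (tgt C g) \<Longrightarrow>
        \<exists>!w. w \<in> hom C (src C h) (src C f) \<and> cmp C f w = h"
    using assms unfolding is_kernel_def by blast+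
  have "cmp C g (cmp C f u) = zro C (src C u) (tgt C g)"
    using f u by (simp flip: comp_assoc)
  then show "u = v" using univ[of "cmp C f u"] f u v uv e by auto
qed

lemma cokernel_epic: assumes "is_cokernel C g f" shows "epic C g"
  unfolding jointly_epic_def
proof (intro allI impI)
  fix u v assume u: "u \<in> arr C" "src C u = tgt C g" and v: "v \<in> arr C" "src C v = tgt C g"
    and uv: "tgt C u = tgt C v" and e: "cmp C u g = cmp C v g"
  have f: "f \<in> arr C" "g \<in> arr C" "tgt C f = src C g" "cmp C g f = zro C (src C f) (tgt C g)"
    and univ: "\<And>h. h \<in> arr C \<Longrightarrow> src C h = tgt C f \<Longrightarrow> cmp C h f = zro C (src C f) (tgt C h) \<Longrightarrow>
        \<exists>!w. w \<in> hom C (tgt C g) (tgt C h) \<and> cmp C w g = h"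
    using assms unfolding is_cokernel_def by blast+
  have "cmp C (cmp C u g) f = zro C (src C f) (tgt C u)"
    using f u by (simp add: comp_assoc)
  then show "u = v" using univ[of "cmp C u g"] f u v uv e by auto
qed

lemma biproduct_jointly_monic:
  assumes bp: "is_biproduct C a b c p1 p2 i1 i2" shows "jointly_monic C p1 p2"
  unfolding jointly_monic_def
proof (intro allI impI)
  have B: "p1 \<in> hom C c a" "p2 \<in> hom C c b" "i1 \<in> hom C a c" "i2 \<in> hom C b c"
    "addm C (cmp C i1 p1) (cmp C i2 p2) = ident C c"
    using bp by (simp_all add: is_biproduct_def)
  have split: "w = addm C (cmp C i1 (cmp C p1 w)) (cmp C i2 (cmp C p2 w))"
    if "w \<in> arr C" "tgt C w = c" for w
  proof -
    have "w = cmp C (addm C (cmp C i1 p1) (cmp C i2 p2)) w" using B that by simp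
    also have "\<dots> = addm C (cmp C i1 (cmp C p1 w)) (cmp C i2 (cmp C p2 w))"
      using comp_add_right[of w "src C w" c "cmp C i1 p1" c "cmp C i2 p2"] B that
      by (simp add: comp_assoc)
    finally show ?thesis .
  qed
  fix u v assume uv: "u \<in> arr C" "v \<in> arr C" "tgt C u = src C p1" "tgt C v = src C p1"
    and p: "cmp C p1 u = cmp C p1 v" "cmp C p2 u = cmp C p2 v"
  have "u = addm C (cmp C i1 (cmp C p1 u)) (cmp C i2 (cmp C p2 u))"
    by (rule split) (use uv B in simp_all)
  also have "\<dots> = addm C (cmp C i1 (cmp C p1 v)) (cmp C i2 (cmp C p2 v))" by (simp only: p)
  also have "\<dots> = v" by (rule split[symmetric]) (use uv B in simp_all)
  finally show "u = v" .
qed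

end

locale additive_cat =
  fixes E :: "('o, 'm) category"
  assumes additive: "additive_category E"
begin

sublocale preadditive_cat E
  using additive by unfold_locales (simp add: additive_category_def)

lemma ex_zero_obj: obtains z where "is_zero_obj E z"
  using additive by (auto simp: additive_category_def)

lemma ex_biproduct:
  assumes "a \<in> obj E" "b \<in> obj E" obtains c p1 p2 i1 i2 where "is_biproduct E a b c p1 p2 i1 i2"
  using additive assms unfolding additive_category_def has_biproducts_iff by blast

lemma bcomplex_obj [simp]: "is_bcomplex E X \<Longrightarrow> fst X n \<in> obj E"
  and bcomplex_diff [simp]: "is_bcomplex E X \<Longrightarrow> snd X n \<in> arr E"
  and bcomplex_diff_src [simp]: "is_bcomplex E X \<Longrightarrow> src E (snd X n) = fst X n"
  and bcomplex_diff_tgt [simp]: "is_bcomplex E X \<Longrightarrow> tgt E (snd X n) = fst X (n + 1)"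
  unfolding is_bcomplex_def hom_iff by blast+

lemma bcomplex_diff_diff:
  "is_bcomplex E X \<Longrightarrow> cmp E (snd X (n + 1)) (snd X n) = zro E (fst X n) (fst X (n + 2))"
  unfolding is_bcomplex_def by blast

lemma bcomplex_bounded:
  assumes "is_bcomplex E X" obtains N where "\<And>n. N < \<bar>n\<bar> \<Longrightarrow> is_zero_obj E (fst X n)"
  using assms unfolding is_bcomplex_def by blast

lemma bcomplexI:
  assumes "\<And>n. d n \<in> hom E (P n) (P (n + 1))"
    and "\<And>n. cmp E (d (n + 1)) (d n) = zro E (P n) (P (n + 2))"
    and "\<And>n. N < \<bar>n\<bar> \<Longrightarrow> is_zero_obj E (P n)"
  shows "is_bcomplex E (P, d)"
  using assms unfolding is_bcomplex_def hom_iff by (metis arr_src_obj fst_conv snd_conv)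

lemma chain_map_arr: "is_chain_map E X Y f \<Longrightarrow> f n \<in> arr E"
  and chain_map_src: "is_chain_map E X Y f \<Longrightarrow> src E (f n) = fst X n"
  and chain_map_tgt: "is_chain_map E X Y f \<Longrightarrow> tgt E (f n) = fst Y n"
  unfolding is_chain_map_def hom_iff by blast+

lemma chain_map_src_bcomplex: "is_chain_map E X Y f \<Longrightarrow> is_bcomplex E X"
  and chain_map_tgt_bcomplex: "is_chain_map E X Y f \<Longrightarrow> is_bcomplex E Y"
  unfolding is_chain_map_def by blast+

lemma chain_map_commute: "is_chain_map E X Y f \<Longrightarrow> cmp E (snd Y n) (f n) = cmp E (f (n + 1)) (snd X n)"
  unfolding is_chain_map_def by blast

lemma chain_map_commute_tail:
  "is_chain_map E X Y f \<Longrightarrow> h \<in> arr E \<Longrightarrow> tgt E h = fst X n \<Longrightarrow>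
   cmp E (snd Y n) (cmp E (f n) h) = cmp E (f (n + 1)) (cmp E (snd X n) h)"
  using chain_map_src_bcomplex[of X Y f] chain_map_tgt_bcomplex[of X Y f] chain_map_arr[of X Y f]
    chain_map_src[of X Y f] chain_map_tgt[of X Y f] chain_map_commute[of X Y f]
  by (simp flip: comp_assoc)

lemmas chain_mapD = chain_map_src_bcomplex chain_map_tgt_bcomplex chain_map_arr chain_map_src chain_map_tgt
  chain_map_commute chain_map_commute_tail

lemma chain_mapI:
  "is_bcomplex E X \<Longrightarrow> is_bcomplex E Y \<Longrightarrow> (\<And>n. f n \<in> hom E (fst X n) (fst Y n)) \<Longrightarrow>
   (\<And>n. cmp E (snd Y n) (f n) = cmp E (f (n + 1)) (snd X n)) \<Longrightarrow> is_chain_map E X Y f"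
  by (simp add: is_chain_map_def)

lemma chain_map_hom: "is_chain_map E X Y f \<Longrightarrow> f n \<in> hom E (fst X n) (fst Y n)"
  by (simp add: chain_mapD)

lemma chain_map_ident: "is_bcomplex E X \<Longrightarrow> is_chain_map E X X (\<lambda>n. ident E (fst X n))"
  by (rule chain_mapI) simp_all

lemma chain_map_comp:
  assumes f: "is_chain_map E X Y f" and g: "is_chain_map E Y Z g"
  shows "is_chain_map E X Z (\<lambda>n. cmp E (g n) (f n))"
  by (rule chain_mapI) (use chain_mapD[OF f] chain_mapD[OF g] in \<open>simp_all add: comp_assoc\<close>)

lemma chain_map_zro:
  "is_bcomplex E X \<Longrightarrow> is_bcomplex E Y \<Longrightarrow> is_chain_map E X Y (\<lambda>n. zro E (fst X n) (fst Y n))"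
  by (rule chain_mapI) simp_all

lemma chain_map_add:
  assumes f: "is_chain_map E X Y f" and g: "is_chain_map E X Y g"
  shows "is_chain_map E X Y (\<lambda>n. addm E (f n) (g n))"
proof (rule chain_mapI)
  note F = chain_mapD[OF f] and G = chain_mapD[OF g]
  fix n
  have "cmp E (snd Y n) (addm E (f n) (g n)) = addm E (cmp E (snd Y n) (f n)) (cmp E (snd Y n) (g n))"
    by (rule comp_add_left[of _ "fst X n" "fst Y n"]) (use F G in simp_all)
  also have "\<dots> = addm E (cmp E (f (n + 1)) (snd X n)) (cmp E (g (n + 1)) (snd X n))"
    using F G by simp
  also have "\<dots> = cmp E (addm E (f (n + 1)) (g (n + 1))) (snd X n)"
    by (rule comp_add_right[symmetric, of _ _ "fst X (n + 1)" _ "fst Y (n + 1)"]) (use F G in simp_all)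
  finally show "cmp E (snd Y n) (addm E (f n) (g n)) = cmp E (addm E (f (n + 1)) (g (n + 1))) (snd X n)" .
qed (use chain_mapD[OF f] chain_mapD[OF g] in simp_all)

lemma chain_map_inverse:
  assumes f: "is_chain_map E X Y f"
  obtains g where "is_chain_map E X Y g" "\<And>n. addm E (f n) (g n) = zro E (fst X n) (fst Y n)"
proof -
  note F = chain_mapD[OF f]
  have "\<forall>n. \<exists>g. g \<in> hom E (fst X n) (fst Y n) \<and> addm E (f n) g = zro E (fst X n) (fst Y n)"
  proof
    fix n
    show "\<exists>g. g \<in> hom E (fst X n) (fst Y n) \<and> addm E (f n) g = zro E (fst X n) (fst Y n)"
      by (rule add_inverse[of "f n"]) (use F in auto)
  qed
  then obtain g where g: "\<And>n. g n \<in> hom E (fst X n) (fst Y n)"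
    and fg: "\<And>n. addm E (f n) (g n) = zro E (fst X n) (fst Y n)" by metis
  have "is_chain_map E X Y g"
  proof (rule chain_mapI[OF F(1,2) g])
    fix n
    let ?a = "fst X n" and ?b = "fst Y (n + 1)"
    have "addm E (cmp E (snd Y n) (f n)) (cmp E (snd Y n) (g n)) = zro E ?a ?b"
      using comp_add_left[of "f n" ?a "fst Y n" "g n" "snd Y n" ?b] F g fg by simp
    moreover have "addm E (cmp E (snd Y n) (f n)) (cmp E (g (n + 1)) (snd X n)) = zro E ?a ?b"
      using comp_add_right[of "snd X n" ?a "fst X (n + 1)" "f (n + 1)" ?b "g (n + 1)"] F g fg by simp
    ultimately show "cmp E (snd Y n) (g n) = cmp E (g (n + 1)) (snd X n)"
      by (rule add_inverse_unique[of "cmp E (snd Y n) (f n)" ?a ?b, rotated 3]) (use F g in simp_all)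
  qed
  then show thesis using that fg by blast
qed

lemma bcomplex_from_jointly_monic:
  assumes X: "is_bcomplex E X" and Y: "is_bcomplex E Y"
    and a: "\<And>n. a n \<in> hom E (P n) (fst X n)" and b: "\<And>n. b n \<in> hom E (P n) (fst Y n)"
    and d: "\<And>n. d n \<in> hom E (P n) (P (n + 1))"
    and ad: "\<And>n. cmp E (snd X n) (a n) = cmp E (a (n + 1)) (d n)"
    and bd: "\<And>n. cmp E (snd Y n) (b n) = cmp E (b (n + 1)) (d n)"
    and jm: "\<And>n. jointly_monic E (a n) (b n)"
  shows "is_bcomplex E (P, d)" "is_chain_map E (P, d) X a" "is_chain_map E (P, d) Y b"
proof -
  have P: "P n \<in> obj E" for n using d[of n] arr_src_obj[of "d n"] by simp
  have vanish: "cmp E (c (n + 2)) (cmp E (d (n + 1)) (d n)) = zro E (P n) (fst Z (n + 2))"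
    if Z: "is_bcomplex E Z" and c: "\<And>n. c n \<in> hom E (P n) (fst Z n)"
      and cd: "\<And>n. cmp E (snd Z n) (c n) = cmp E (c (n + 1)) (d n)" for Z c n
  proof -
    have "cmp E (c (n + 2)) (cmp E (d (n + 1)) (d n)) = cmp E (snd Z (n + 1)) (cmp E (c (n + 1)) (d n))"
      using c d Z cd[of "n + 1"] by (simp flip: comp_assoc)
    also have "\<dots> = cmp E (cmp E (snd Z (n + 1)) (snd Z n)) (c n)"
      using c d Z by (simp add: comp_assoc flip: cd)
    finally show ?thesis using Z c P by (simp add: bcomplex_diff_diff)
  qed
  have dd: "cmp E (d (n + 1)) (d n) = zro E (P n) (P (n + 2))" for n
    by (rule jointly_monicD[OF jm[of "n + 2"]]) (use vanish[OF X a ad] vanish[OF Y b bd] a b d P in simp_all)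
  obtain NX NY where NX: "\<And>n. NX < \<bar>n\<bar> \<Longrightarrow> is_zero_obj E (fst X n)"
    and NY: "\<And>n. NY < \<bar>n\<bar> \<Longrightarrow> is_zero_obj E (fst Y n)"
    using bcomplex_bounded[OF X] bcomplex_bounded[OF Y] by metis
  have "is_zero_obj E (P n)" if "max NX NY < \<bar>n\<bar>" for n
    using jointly_monic_zero_obj[OF jm[of n]] NX NY a b that by simp
  then show PC: "is_bcomplex E (P, d)" using bcomplexI[OF d dd] by blast
  show "is_chain_map E (P, d) X a" "is_chain_map E (P, d) Y b"
    by (rule chain_mapI[OF PC]; use X Y a b ad bd in simp)+
qed

lemma bcomplex_from_jointly_epic:
  assumes X: "is_bcomplex E X" and Y: "is_bcomplex E Y"
    and a: "\<And>n. a n \<in> hom E (fst X n) (P n)" and b: "\<And>n. b n \<in> hom E (fst Y n) (P n)"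
    and d: "\<And>n. d n \<in> hom E (P n) (P (n + 1))"
    and ad: "\<And>n. cmp E (d n) (a n) = cmp E (a (n + 1)) (snd X n)"
    and bd: "\<And>n. cmp E (d n) (b n) = cmp E (b (n + 1)) (snd Y n)"
    and je: "\<And>n. jointly_epic E (a n) (b n)"
  shows "is_bcomplex E (P, d)" "is_chain_map E X (P, d) a" "is_chain_map E Y (P, d) b"
proof -
  have P: "P n \<in> obj E" for n using d[of n] arr_src_obj[of "d n"] by simp
  have vanish: "cmp E (cmp E (d (n + 1)) (d n)) (c n) = zro E (fst Z n) (P (n + 2))"
    if Z: "is_bcomplex E Z" and c: "\<And>n. c n \<in> hom E (fst Z n) (P n)"
      and cd: "\<And>n. cmp E (d n) (c n) = cmp E (c (n + 1)) (snd Z n)" for Z c n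
  proof -
    have "cmp E (cmp E (d (n + 1)) (d n)) (c n) = cmp E (d (n + 1)) (cmp E (c (n + 1)) (snd Z n))"
      using c d Z by (simp add: comp_assoc cd)
    also have "\<dots> = cmp E (c (n + 2)) (cmp E (snd Z (n + 1)) (snd Z n))"
      using c d Z cd[of "n + 1"] by (simp flip: comp_assoc)
    finally show ?thesis using Z c P by (simp add: bcomplex_diff_diff)
  qed
  have dd: "cmp E (d (n + 1)) (d n) = zro E (P n) (P (n + 2))" for n
    by (rule jointly_epicD[OF je[of n]]) (use vanish[OF X a ad] vanish[OF Y b bd] a b d P in simp_all)
  obtain NX NY where NX: "\<And>n. NX < \<bar>n\<bar> \<Longrightarrow> is_zero_obj E (fst X n)"
    and NY: "\<And>n. NY < \<bar>n\<bar> \<Longrightarrow> is_zero_obj E (fst Y n)"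
    using bcomplex_bounded[OF X] bcomplex_bounded[OF Y] by metis
  have "is_zero_obj E (P n)" if "max NX NY < \<bar>n\<bar>" for n
    using jointly_epic_zero_obj[OF je[of n]] NX NY a b that by simp
  then show PC: "is_bcomplex E (P, d)" using bcomplexI[OF d dd] by blast
  show "is_chain_map E X (P, d) a" "is_chain_map E Y (P, d) b"
    by (rule chain_mapI[OF _ PC]; use X Y a b ad bd in simp)+
qed

lemma chain_map_into_jointly_monic:
  assumes a: "is_chain_map E P X a" and b: "is_chain_map E P Y b"
    and jm: "\<And>n. jointly_monic E (a n) (b n)"
    and w: "\<And>n. w n \<in> hom E (fst U n) (fst P n)" and U: "is_bcomplex E U"
    and aw: "is_chain_map E U X (\<lambda>n. cmp E (a n) (w n))"
    and bw: "is_chain_map E U Y (\<lambda>n. cmp E (b n) (w n))"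
  shows "is_chain_map E U P w"
proof (rule chain_mapI[OF U chain_map_src_bcomplex[OF a] w])
  fix n
  show "cmp E (snd P n) (w n) = cmp E (w (n + 1)) (snd U n)"
    by (rule jointly_monicD[OF jm[of "n + 1"]])
      (use chain_map_commute[OF aw, of n] chain_map_commute[OF bw, of n] w U
        chain_mapD[OF a] chain_mapD[OF b] in \<open>simp_all add: comp_assoc\<close>)
qed

lemma chain_map_from_jointly_epic:
  assumes a: "is_chain_map E X P a" and b: "is_chain_map E Y P b"
    and je: "\<And>n. jointly_epic E (a n) (b n)"
    and w: "\<And>n. w n \<in> hom E (fst P n) (fst V n)" and V: "is_bcomplex E V"
    and aw: "is_chain_map E X V (\<lambda>n. cmp E (w n) (a n))"
    and bw: "is_chain_map E Y V (\<lambda>n. cmp E (w n) (b n))"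
  shows "is_chain_map E P V w"
proof (rule chain_mapI[OF chain_map_tgt_bcomplex[OF a] V w])
  fix n
  show "cmp E (snd V n) (w n) = cmp E (w (n + 1)) (snd P n)"
    by (rule jointly_epicD[OF je[of n]])
      (use chain_map_commute[OF aw, of n] chain_map_commute[OF bw, of n] w V
        chain_mapD[OF a] chain_mapD[OF b] in \<open>simp_all add: comp_assoc\<close>)
qed

lemma Cb_simps [simp]:
  "obj (Cb E) = {x. is_bcomplex E x}"
  "arr (Cb E) = {m. is_chain_map E (fst m) (fst (snd m)) (snd (snd m))}"
  "src (Cb E) m = fst m" "tgt (Cb E) m = fst (snd m)"
  "ident (Cb E) x = (x, x, \<lambda>n. ident E (fst x n))"
  "cmp (Cb E) g f = (fst f, fst (snd g), \<lambda>n. cmp E (snd (snd g) n) (snd (snd f) n))"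
  "addm (Cb E) f g = (fst f, fst (snd f), \<lambda>n. addm E (snd (snd f) n) (snd (snd g) n))"
  "zro (Cb E) x y = (x, y, \<lambda>n. zro E (fst x n) (fst y n))"
  by (simp_all add: Cb_def)

lemma Cb_hom_iff: "m \<in> hom (Cb E) X Y \<longleftrightarrow> (\<exists>f. m = (X, Y, f) \<and> is_chain_map E X Y f)"
  by (cases m) auto

lemma Cb_category: "is_category (Cb E)"
  unfolding is_category_def Cb_hom_iff
  by (auto simp: chain_map_ident chain_map_comp chain_mapD comp_assoc intro: chain_map_src_bcomplex chain_map_tgt_bcomplex)

lemma Cb_add_inverse:
  assumes "m \<in> hom (Cb E) X Y" shows "\<exists>m'\<in>hom (Cb E) X Y. addm (Cb E) m m' = zro (Cb E) X Y"
proof -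
  obtain f where m: "m = (X, Y, f)" and f: "is_chain_map E X Y f" using assms Cb_hom_iff by blast
  obtain g where g: "is_chain_map E X Y g" and fg: "\<And>n. addm E (f n) (g n) = zro E (fst X n) (fst Y n)"
    using chain_map_inverse[OF f] by blast
  have "addm (Cb E) m (X, Y, g) = zro (Cb E) X Y" using m fg by simp
  moreover have "(X, Y, g) \<in> hom (Cb E) X Y" using g by simp
  ultimately show ?thesis by blast
qed

lemma Cb_preadditive: "preadditive (Cb E)"
  unfolding preadditive_def
proof (intro conjI Cb_category allI impI ballI Cb_add_inverse)
qed (auto simp: Cb_hom_iff chain_map_zro chain_map_add chain_mapD,
    auto simp: fun_eq_iff intro: add_commute add_assoc comp_add_left comp_add_right chain_map_hom)

sublocale Cb: preadditive_cat "Cb E"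
  by unfold_locales (rule Cb_preadditive)

lemma Cb_zero_obj_iff: "is_zero_obj (Cb E) X \<longleftrightarrow> is_bcomplex E X \<and> (\<forall>n. is_zero_obj E (fst X n))"
  by (auto simp: Cb.zero_obj_iff zero_obj_iff fun_eq_iff)

lemma ex_zero_bcomplex: obtains Z where "is_bcomplex E Z" "\<And>n. is_zero_obj E (fst Z n)"
proof -
  obtain z where z: "is_zero_obj E z" using ex_zero_obj by blast
  have "is_bcomplex E (\<lambda>n. z, \<lambda>n. zro E z z)"
    by (rule bcomplexI[where N = 0]) (use z in \<open>simp_all add: zero_obj_iff\<close>)
  then show thesis using that z by simp
qed

lemma Cb_biproducts: "has_biproducts (Cb E)"
  unfolding has_biproducts_iff
proof (intro ballI)
  fix X Y assume "X \<in> obj (Cb E)" "Y \<in> obj (Cb E)"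
  then have X: "is_bcomplex E X" and Y: "is_bcomplex E Y" by simp_all
  have "\<forall>n. \<exists>c p1 p2 i1 i2. is_biproduct E (fst X n) (fst Y n) c p1 p2 i1 i2"
    using ex_biproduct X Y by (metis bcomplex_obj)
  then obtain c p1 p2 i1 i2 where bp: "\<And>n. is_biproduct E (fst X n) (fst Y n) (c n) (p1 n) (p2 n) (i1 n) (i2 n)"
    by metis
  note B = bp[unfolded is_biproduct_def]
  \<comment> \<open>the differential of the biproduct complex is the diagonal matrix of dX and dY\<close>
  define d where "d n = addm E (cmp E (i1 (n + 1)) (cmp E (snd X n) (p1 n)))
    (cmp E (i2 (n + 1)) (cmp E (snd Y n) (p2 n)))" for n
  have d: "d n \<in> hom E (c n) (c (n + 1))" for n
    using B X Y by (simp add: d_def)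
  have p1d: "cmp E (snd X n) (p1 n) = cmp E (p1 (n + 1)) (d n)" for n
    using B X Y comp_add_left[of _ "c n" "c (n + 1)" _ "p1 (n + 1)" "fst X (n + 1)"]
    by (simp add: d_def flip: comp_assoc)
  have p2d: "cmp E (snd Y n) (p2 n) = cmp E (p2 (n + 1)) (d n)" for n
    using B X Y comp_add_left[of _ "c n" "c (n + 1)" _ "p2 (n + 1)" "fst Y (n + 1)"]
    by (simp add: d_def flip: comp_assoc)
  have Z: "is_bcomplex E (c, d)" and P1: "is_chain_map E (c, d) X p1" and P2: "is_chain_map E (c, d) Y p2"
    using bcomplex_from_jointly_monic[OF X Y _ _ d p1d p2d biproduct_jointly_monic[OF bp]] B by simp_all
  have I1: "is_chain_map E X (c, d) i1"
    by (rule chain_map_into_jointly_monic[OF P1 P2 biproduct_jointly_monic[OF bp]])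
      (use B X Y chain_map_ident[OF X] chain_map_zro[OF X Y] in simp_all)
  have I2: "is_chain_map E Y (c, d) i2"
    by (rule chain_map_into_jointly_monic[OF P1 P2 biproduct_jointly_monic[OF bp]])
      (use B X Y chain_map_ident[OF Y] chain_map_zro[OF Y X] in simp_all)
  have "is_biproduct (Cb E) X Y (c, d) (((c, d), X, p1)) ((c, d), Y, p2) (X, (c, d), i1) (Y, (c, d), i2)"
    unfolding is_biproduct_def using Z P1 P2 I1 I2 B by simp
  then show "\<exists>Z q1 q2 j1 j2. is_biproduct (Cb E) X Y Z q1 q2 j1 j2" by blast
qed

lemma Cb_additive: "additive_category (Cb E)"
  unfolding additive_category_def
  using Cb_preadditive Cb_biproducts ex_zero_bcomplex Cb_zero_obj_iff by metis

lemma Cb_is_kernel: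
  assumes f: "is_chain_map E X Y f" and g: "is_chain_map E Y Z g" and ker: "\<And>n. is_kernel E (f n) (g n)"
  shows "is_kernel (Cb E) (X, Y, f) (Y, Z, g)"
  unfolding is_kernel_def
proof (intro conjI allI impI)
  note F = chain_mapD[OF f] and G = chain_mapD[OF g]
  have gf: "cmp E (g n) (f n) = zro E (fst X n) (fst Z n)" for n
    using ker[of n] F G by (simp add: is_kernel_def)
  then show "cmp (Cb E) (Y, Z, g) (X, Y, f) = zro (Cb E) (src (Cb E) (X, Y, f)) (tgt (Cb E) (Y, Z, g))"
    by simp
  fix h assume "h \<in> arr (Cb E) \<and> tgt (Cb E) h = src (Cb E) (Y, Z, g) \<and>
    cmp (Cb E) (Y, Z, g) h = zro (Cb E) (src (Cb E) h) (tgt (Cb E) (Y, Z, g))"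
  then obtain U h' where hh: "h = (U, Y, h')" and h': "is_chain_map E U Y h'"
    and gh: "\<And>n. cmp E (g n) (h' n) = zro E (fst U n) (fst Z n)"
    by (cases h) (auto simp: fun_eq_iff)
  note H = chain_mapD[OF h']
  have "\<exists>u. u \<in> hom E (fst U n) (fst X n) \<and> cmp E (f n) u = h' n" for n
    by (rule kernel_factor[OF ker[of n], of "h' n"]) (use H F G gh in auto)
  then obtain u where u: "\<And>n. u n \<in> hom E (fst U n) (fst X n)" and fu: "\<And>n. cmp E (f n) (u n) = h' n"
    by metis
  have U: "is_chain_map E U X u"
    by (rule chain_map_into_jointly_monic[OF f f kernel_monic[OF ker] u H(1)]) (use fu h' in simp_all)
  show "\<exists>!w. w \<in> hom (Cb E) (src (Cb E) h) (src (Cb E) (X, Y, f)) \<and> cmp (Cb E) (X, Y, f) w = h"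
  proof (rule ex1I[of _ "(U, X, u)"])
    show "(U, X, u) \<in> hom (Cb E) (src (Cb E) h) (src (Cb E) (X, Y, f)) \<and> cmp (Cb E) (X, Y, f) (U, X, u) = h"
      using U hh fu by simp
    fix w assume w: "w \<in> hom (Cb E) (src (Cb E) h) (src (Cb E) (X, Y, f)) \<and> cmp (Cb E) (X, Y, f) w = h"
    then obtain w' where ww: "w = (U, X, w')" and w': "is_chain_map E U X w'"
      and fw: "\<And>n. cmp E (f n) (w' n) = h' n"
      using hh by (cases w) (auto simp: fun_eq_iff)
    have "w' n = u n" for n
      by (rule jointly_monicD[OF kernel_monic[OF ker[of n]]]) (use u fu fw chain_mapD[OF w'] F in simp_all)
    then show "w = (U, X, u)" using ww by auto
  qed
qed (use f g in simp_all)

lemma Cb_is_cokernel: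
  assumes f: "is_chain_map E X Y f" and g: "is_chain_map E Y Z g" and coker: "\<And>n. is_cokernel E (g n) (f n)"
  shows "is_cokernel (Cb E) (Y, Z, g) (X, Y, f)"
  unfolding is_cokernel_def
proof (intro conjI allI impI)
  note F = chain_mapD[OF f] and G = chain_mapD[OF g]
  have gf: "cmp E (g n) (f n) = zro E (fst X n) (fst Z n)" for n
    using coker[of n] F G by (simp add: is_cokernel_def)
  then show "cmp (Cb E) (Y, Z, g) (X, Y, f) = zro (Cb E) (src (Cb E) (X, Y, f)) (tgt (Cb E) (Y, Z, g))"
    by simp
  fix h assume "h \<in> arr (Cb E) \<and> src (Cb E) h = tgt (Cb E) (X, Y, f) \<and>
    cmp (Cb E) h (X, Y, f) = zro (Cb E) (src (Cb E) (X, Y, f)) (tgt (Cb E) h)"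
  then obtain V h' where hh: "h = (Y, V, h')" and h': "is_chain_map E Y V h'"
    and hf: "\<And>n. cmp E (h' n) (f n) = zro E (fst X n) (fst V n)"
    by (cases h) (auto simp: fun_eq_iff)
  note H = chain_mapD[OF h']
  have "\<exists>u. u \<in> hom E (fst Z n) (fst V n) \<and> cmp E u (g n) = h' n" for n
    by (rule cokernel_factor[OF coker[of n], of "h' n"]) (use H F G hf in auto)
  then obtain u where u: "\<And>n. u n \<in> hom E (fst Z n) (fst V n)" and ug: "\<And>n. cmp E (u n) (g n) = h' n"
    by metis
  have U: "is_chain_map E Z V u"
    by (rule chain_map_from_jointly_epic[OF g g cokernel_epic[OF coker] u H(2)]) (use ug h' in simp_all)
  show "\<exists>!w. w \<in> hom (Cb E) (tgt (Cb E) (Y, Z, g)) (tgt (Cb E) h) \<and> cmp (Cb E) w (Y, Z, g) = h"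
  proof (rule ex1I[of _ "(Z, V, u)"])
    show "(Z, V, u) \<in> hom (Cb E) (tgt (Cb E) (Y, Z, g)) (tgt (Cb E) h) \<and> cmp (Cb E) (Z, V, u) (Y, Z, g) = h"
      using U hh ug by simp
    fix w assume w: "w \<in> hom (Cb E) (tgt (Cb E) (Y, Z, g)) (tgt (Cb E) h) \<and> cmp (Cb E) w (Y, Z, g) = h"
    then obtain w' where ww: "w = (Z, V, w')" and w': "is_chain_map E Z V w'"
      and wg: "\<And>n. cmp E (w' n) (g n) = h' n"
      using hh by (cases w) (auto simp: fun_eq_iff)
    have "w' n = u n" for n
      by (rule jointly_epicD[OF cokernel_epic[OF coker[of n]]]) (use u ug wg chain_mapD[OF w'] G in simp_all)
    then show "w = (Z, V, u)" using ww by auto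
  qed
qed (use f g in simp_all)

lemma Cb_is_pullback:
  assumes g: "is_chain_map E B C g" and t: "is_chain_map E C' C t"
    and p: "is_chain_map E P B p" and q: "is_chain_map E P C' q"
    and pb: "\<And>n. is_pullback E (g n) (t n) (p n) (q n)"
  shows "is_pullback (Cb E) (B, C, g) (C', C, t) (P, B, p) (P, C', q)"
  unfolding is_pullback_def
proof (intro conjI allI impI)
  note S = pullback_square[OF pb]
  show "cmp (Cb E) (B, C, g) (P, B, p) = cmp (Cb E) (C', C, t) (P, C', q)"
    using S by (simp add: fun_eq_iff)
  fix u v assume "u \<in> arr (Cb E) \<and> v \<in> arr (Cb E) \<and> src (Cb E) u = src (Cb E) v \<and>
    tgt (Cb E) u = src (Cb E) (B, C, g) \<and> tgt (Cb E) v = src (Cb E) (C', C, t) \<and>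
    cmp (Cb E) (B, C, g) u = cmp (Cb E) (C', C, t) v"
  then obtain U u' v' where uv: "u = (U, B, u')" "v = (U, C', v')"
    and u': "is_chain_map E U B u'" and v': "is_chain_map E U C' v'"
    and sq: "\<And>n. cmp E (g n) (u' n) = cmp E (t n) (v' n)"
    by (cases u, cases v) (auto simp: fun_eq_iff)
  have "\<exists>w. w \<in> hom E (fst U n) (fst P n) \<and> cmp E (p n) w = u' n \<and> cmp E (q n) w = v' n" for n
    by (rule pullback_factor[OF pb[of n], of "u' n" "v' n"])
      (use sq chain_mapD[OF u'] chain_mapD[OF v'] chain_mapD[OF p] chain_mapD[OF g]
        chain_mapD[OF t] in auto)
  then obtain w where w: "\<And>n. w n \<in> hom E (fst U n) (fst P n)"
    and pw: "\<And>n. cmp E (p n) (w n) = u' n" and qw: "\<And>n. cmp E (q n) (w n) = v' n" by metis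
  have W: "is_chain_map E U P w"
    by (rule chain_map_into_jointly_monic[OF p q pullback_jointly_monic[OF pb] w])
      (use u' v' pw qw chain_mapD[OF u'] in simp_all)
  show "\<exists>!w. w \<in> hom (Cb E) (src (Cb E) u) (src (Cb E) (P, B, p)) \<and>
    cmp (Cb E) (P, B, p) w = u \<and> cmp (Cb E) (P, C', q) w = v"
  proof (rule ex1I[of _ "(U, P, w)"])
    fix m assume "m \<in> hom (Cb E) (src (Cb E) u) (src (Cb E) (P, B, p)) \<and>
      cmp (Cb E) (P, B, p) m = u \<and> cmp (Cb E) (P, C', q) m = v"
    then obtain m' where mm: "m = (U, P, m')" and m': "is_chain_map E U P m'"
      and pm: "\<And>n. cmp E (p n) (m' n) = u' n" and qm: "\<And>n. cmp E (q n) (m' n) = v' n"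
      using uv by (cases m) (auto simp: fun_eq_iff)
    have "m' n = w n" for n
      by (rule jointly_monicD[OF pullback_jointly_monic[OF pb[of n]]])
        (use w pw qw pm qm chain_mapD[OF m'] chain_mapD[OF p] in simp_all)
    then show "m = (U, P, w)" using mm by auto
  qed (use W uv pw qw in \<open>simp_all add: fun_eq_iff\<close>)
qed (use g t p q in simp_all)

lemma Cb_pullback_exists:
  assumes g: "is_chain_map E B C g" and t: "is_chain_map E C' C t"
    and ex: "\<And>n. \<exists>p q. is_pullback E (g n) (t n) p q"
  obtains P p q where "is_pullback (Cb E) (B, C, g) (C', C, t) (P, B, p) (P, C', q)"
    "\<And>n. is_pullback E (g n) (t n) (p n) (q n)"
proof -
  obtain p q where pb: "\<And>n. is_pullback E (g n) (t n) (p n) (q n)" using ex by metis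
  note S = pullback_square[OF pb] and G = chain_mapD[OF g] and T = chain_mapD[OF t]
  have sq: "cmp E (g (n + 1)) (cmp E (snd B n) (p n)) = cmp E (t (n + 1)) (cmp E (snd C' n) (q n))" for n
  proof -
    have "cmp E (g (n + 1)) (cmp E (snd B n) (p n)) = cmp E (snd C n) (cmp E (g n) (p n))"
      by (rule chain_map_commute_tail[OF g, symmetric]) (use S G in simp_all)
    also have "\<dots> = cmp E (snd C n) (cmp E (t n) (q n))" using S by simp
    also have "\<dots> = cmp E (t (n + 1)) (cmp E (snd C' n) (q n))"
      by (rule chain_map_commute_tail[OF t]) (use S T in simp_all)
    finally show ?thesis .
  qed
  have "\<exists>d. d \<in> hom E (src E (p n)) (src E (p (n + 1))) \<and>
      cmp E (p (n + 1)) d = cmp E (snd B n) (p n) \<and> cmp E (q (n + 1)) d = cmp E (snd C' n) (q n)" for n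
    by (rule pullback_factor[OF pb[of "n + 1"], of "cmp E (snd B n) (p n)" "cmp E (snd C' n) (q n)"])
      (use sq G T S in auto)
  then obtain d where d: "\<And>n. d n \<in> hom E (src E (p n)) (src E (p (n + 1)))"
    and pd: "\<And>n. cmp E (p (n + 1)) (d n) = cmp E (snd B n) (p n)"
    and qd: "\<And>n. cmp E (q (n + 1)) (d n) = cmp E (snd C' n) (q n)" by metis
  let ?P = "(\<lambda>n. src E (p n), d)"
  have "is_chain_map E ?P B p" "is_chain_map E ?P C' q"
    using bcomplex_from_jointly_monic[OF G(1) T(1) _ _ d pd[symmetric] qd[symmetric]
        pullback_jointly_monic[OF pb]] S G T by simp_all
  then show thesis using that Cb_is_pullback[OF g t _ _ pb] pb by blast
qed

lemma Cb_is_pushout: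
  assumes i: "is_chain_map E C D i" and q: "is_chain_map E C A q"
    and q': "is_chain_map E D P q'" and i': "is_chain_map E A P i'"
    and po: "\<And>n. is_pushout E (i n) (q n) (q' n) (i' n)"
  shows "is_pushout (Cb E) (C, D, i) (C, A, q) (D, P, q') (A, P, i')"
  unfolding is_pushout_def
proof (intro conjI allI impI)
  note S = pushout_square[OF po]
  show "cmp (Cb E) (D, P, q') (C, D, i) = cmp (Cb E) (A, P, i') (C, A, q)"
    using S by (simp add: fun_eq_iff)
  fix u v assume "u \<in> arr (Cb E) \<and> v \<in> arr (Cb E) \<and> src (Cb E) u = tgt (Cb E) (C, D, i) \<and>
    src (Cb E) v = tgt (Cb E) (C, A, q) \<and> tgt (Cb E) u = tgt (Cb E) v \<and>
    cmp (Cb E) u (C, D, i) = cmp (Cb E) v (C, A, q)"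
  then obtain V u' v' where uv: "u = (D, V, u')" "v = (A, V, v')"
    and u': "is_chain_map E D V u'" and v': "is_chain_map E A V v'"
    and sq: "\<And>n. cmp E (u' n) (i n) = cmp E (v' n) (q n)"
    by (cases u, cases v) (auto simp: fun_eq_iff)
  have "\<exists>w. w \<in> hom E (fst P n) (fst V n) \<and> cmp E w (q' n) = u' n \<and> cmp E w (i' n) = v' n" for n
    by (rule pushout_factor[OF po[of n], of "u' n" "v' n"])
      (use sq chain_mapD[OF u'] chain_mapD[OF v'] chain_mapD[OF q'] chain_mapD[OF i]
        chain_mapD[OF q] in auto)
  then obtain w where w: "\<And>n. w n \<in> hom E (fst P n) (fst V n)"
    and wq: "\<And>n. cmp E (w n) (q' n) = u' n" and wi: "\<And>n. cmp E (w n) (i' n) = v' n" by metis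
  have W: "is_chain_map E P V w"
    by (rule chain_map_from_jointly_epic[OF q' i' pushout_jointly_epic[OF po] w])
      (use u' v' wq wi chain_mapD[OF u'] in simp_all)
  show "\<exists>!w. w \<in> hom (Cb E) (tgt (Cb E) (D, P, q')) (tgt (Cb E) u) \<and>
    cmp (Cb E) w (D, P, q') = u \<and> cmp (Cb E) w (A, P, i') = v"
  proof (rule ex1I[of _ "(P, V, w)"])
    fix m assume "m \<in> hom (Cb E) (tgt (Cb E) (D, P, q')) (tgt (Cb E) u) \<and>
      cmp (Cb E) m (D, P, q') = u \<and> cmp (Cb E) m (A, P, i') = v"
    then obtain m' where mm: "m = (P, V, m')" and m': "is_chain_map E P V m'"
      and mq: "\<And>n. cmp E (m' n) (q' n) = u' n" and mi: "\<And>n. cmp E (m' n) (i' n) = v' n"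
      using uv by (cases m) (auto simp: fun_eq_iff)
    have "m' n = w n" for n
      by (rule jointly_epicD[OF pushout_jointly_epic[OF po[of n]]])
        (use w wq wi mq mi chain_mapD[OF m'] chain_mapD[OF q'] in simp_all)
    then show "m = (P, V, w)" using mm by auto
  qed (use W uv wq wi in \<open>simp_all add: fun_eq_iff\<close>)
qed (use i q q' i' in simp_all)

lemma Cb_pushout_exists:
  assumes i: "is_chain_map E C D i" and q: "is_chain_map E C A q"
    and ex: "\<And>n. \<exists>q' i'. is_pushout E (i n) (q n) q' i'"
  obtains P q' i' where "is_pushout (Cb E) (C, D, i) (C, A, q) (D, P, q') (A, P, i')"
    "\<And>n. is_pushout E (i n) (q n) (q' n) (i' n)"
proof -
  obtain q' i' where po: "\<And>n. is_pushout E (i n) (q n) (q' n) (i' n)" using ex by metis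
  note S = pushout_square[OF po] and I = chain_mapD[OF i] and Q = chain_mapD[OF q]
  have sq: "cmp E (cmp E (q' (n + 1)) (snd D n)) (i n) = cmp E (cmp E (i' (n + 1)) (snd A n)) (q n)" for n
  proof -
    have "cmp E (cmp E (q' (n + 1)) (snd D n)) (i n) = cmp E (q' (n + 1)) (cmp E (i (n + 1)) (snd C n))"
      using S I by (simp add: comp_assoc)
    also have "\<dots> = cmp E (i' (n + 1)) (cmp E (q (n + 1)) (snd C n))"
      using S I Q by (simp flip: comp_assoc)
    also have "\<dots> = cmp E (cmp E (i' (n + 1)) (snd A n)) (q n)"
      using S Q by (simp add: comp_assoc)
    finally show ?thesis .
  qed
  have "\<exists>d. d \<in> hom E (tgt E (q' n)) (tgt E (q' (n + 1))) \<and>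
      cmp E d (q' n) = cmp E (q' (n + 1)) (snd D n) \<and> cmp E d (i' n) = cmp E (i' (n + 1)) (snd A n)" for n
    by (rule pushout_factor[OF po[of n], of "cmp E (q' (n + 1)) (snd D n)" "cmp E (i' (n + 1)) (snd A n)"])
      (use sq I Q S in auto)
  then obtain d where d: "\<And>n. d n \<in> hom E (tgt E (q' n)) (tgt E (q' (n + 1)))"
    and dq: "\<And>n. cmp E (d n) (q' n) = cmp E (q' (n + 1)) (snd D n)"
    and di: "\<And>n. cmp E (d n) (i' n) = cmp E (i' (n + 1)) (snd A n)" by metis
  let ?P = "(\<lambda>n. tgt E (q' n), d)"
  have "is_chain_map E D ?P q'" "is_chain_map E A ?P i'"
    using bcomplex_from_jointly_epic[OF I(2) Q(2) _ _ d dq di pushout_jointly_epic[OF po]] S I Q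
    by simp_all
  then show thesis using that Cb_is_pushout[OF i q _ _ po] po by blast
qed

end

locale right_exact_cat =
  fixes E :: "('o, 'm) category" and Conf :: "('m \<times> 'm) set"
  assumes right_exact: "right_exact E Conf"
begin

sublocale additive_cat E
  using right_exact by unfold_locales (simp add: right_exact_def conflation_category_def)

lemma conflation_kernel: "(f, g) \<in> Conf \<Longrightarrow> is_kernel E f g"
  and conflation_cokernel: "(f, g) \<in> Conf \<Longrightarrow> is_cokernel E g f"
  using right_exact by (simp_all add: right_exact_def conflation_category_def kernel_cokernel_pair_def)

lemma conflationD:
  assumes "(f, g) \<in> Conf"
  shows "f \<in> arr E" "g \<in> arr E" "tgt E f = src E g" "cmp E g f = zro E (src E f) (tgt E g)"
  using conflation_kernel[OF assms] by (simp_all add: is_kernel_def)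

lemma inflation_monic: "inflation E Conf f \<Longrightarrow> monic E f"
  by (auto simp: inflation_def intro: kernel_monic conflation_kernel)

lemma deflation_epic: "deflation E Conf g \<Longrightarrow> epic E g"
  by (auto simp: deflation_def intro: cokernel_epic conflation_cokernel)

lemma inflation_arr: "inflation E Conf f \<Longrightarrow> f \<in> arr E"
  and deflation_arr: "deflation E Conf g \<Longrightarrow> g \<in> arr E"
  by (auto simp: inflation_def deflation_def dest: conflationD)

lemma conflation_iso_closed:
  assumes "(f, g) \<in> Conf" "f' \<in> arr E" "g' \<in> arr E" "tgt E f' = src E g'"
    and "a \<in> hom E (src E f) (src E f')" "b \<in> hom E (tgt E f) (tgt E f')" "c \<in> hom E (tgt E g) (tgt E g')"
    and "is_iso E a" "is_iso E b" "is_iso E c" "cmp E b f = cmp E f' a" "cmp E c g = cmp E g' b"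
  shows "(f', g') \<in> Conf"
  using right_exact assms unfolding right_exact_def conflation_category_def by blast

lemma zero_obj_ident_deflation: "is_zero_obj E z \<Longrightarrow> deflation E Conf (ident E z)"
  and deflation_comp:
    "deflation E Conf g \<Longrightarrow> deflation E Conf h \<Longrightarrow> tgt E g = src E h \<Longrightarrow> deflation E Conf (cmp E h g)"
  and pullback_exists:
    "deflation E Conf g \<Longrightarrow> t \<in> arr E \<Longrightarrow> tgt E t = tgt E g \<Longrightarrow> \<exists>p q. is_pullback E g t p q"
  and pullback_deflation:
    "deflation E Conf g \<Longrightarrow> t \<in> arr E \<Longrightarrow> tgt E t = tgt E g \<Longrightarrow> is_pullback E g t p q \<Longrightarrow>
     deflation E Conf q"
  using right_exact unfolding right_exact_def by blast+

lemma ident_deflation: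
  assumes a: "a \<in> obj E" shows "deflation E Conf (ident E a)"
proof -
  obtain z where z: "is_zero_obj E z" using ex_zero_obj by blast
  have zo: "z \<in> obj E" using z by (simp add: zero_obj_iff)
  have "is_pullback E (ident E z) (zro E a z) (zro E a z) (ident E a)"
    unfolding is_pullback_def
  proof (intro conjI allI impI)
    fix u v assume uv: "u \<in> arr E \<and> v \<in> arr E \<and> src E u = src E v \<and> tgt E u = src E (ident E z) \<and>
      tgt E v = src E (zro E a z) \<and> cmp E (ident E z) u = cmp E (zro E a z) v"
    show "\<exists>!w. w \<in> hom E (src E u) (src E (zro E a z)) \<and> cmp E (zro E a z) w = u \<and> cmp E (ident E a) w = v"
      using uv a zo by (intro ex1I[of _ v]) auto
  qed (use a zo in simp_all)
  then show ?thesis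
    using pullback_deflation[OF zero_obj_ident_deflation[OF z], of "zro E a z"] a zo by simp
qed

lemma iso_deflation: assumes u: "is_iso E u" shows "deflation E Conf u"
proof -
  have ua: "u \<in> arr E" using u by (simp add: is_iso_def)
  obtain k where k: "(k, ident E (src E u)) \<in> Conf"
    using ident_deflation[of "src E u"] ua by (auto simp: deflation_def)
  note K = conflationD[OF k]
  have "(k, u) \<in> Conf"
    by (rule conflation_iso_closed[OF k, where a = "ident E (src E k)" and b = "ident E (src E u)" and c = u])
      (use K(1-3) ua u ident_iso in simp_all)
  then show ?thesis by (auto simp: deflation_def)
qed

lemma deflation_comp_iso:
  "deflation E Conf g \<Longrightarrow> is_iso E u \<Longrightarrow> tgt E u = src E g \<Longrightarrow> deflation E Conf (cmp E g u)"
  by (rule deflation_comp[OF iso_deflation]) (auto simp: is_iso_def)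

lemma iso_comp_deflation:
  "deflation E Conf g \<Longrightarrow> is_iso E u \<Longrightarrow> src E u = tgt E g \<Longrightarrow> deflation E Conf (cmp E u g)"
  by (rule deflation_comp[OF _ iso_deflation]) auto

lemma iso_comp_inflation:
  assumes f: "inflation E Conf f" and u: "is_iso E u" and fu: "src E u = tgt E f"
  shows "inflation E Conf (cmp E u f)"
proof -
  obtain g where c: "(f, g) \<in> Conf" using f by (auto simp: inflation_def)
  note C = conflationD[OF c]
  obtain v where v: "v \<in> arr E" "src E v = tgt E u" "tgt E v = src E u"
    "cmp E v u = ident E (src E u)" "cmp E u v = ident E (tgt E u)"
    using u by (auto simp: is_iso_def)
  have u': "u \<in> arr E" "src E u = tgt E f" using u fu by (simp_all add: is_iso_def)
  have "cmp E (cmp E g v) u = g" using v u' C by (simp add: comp_assoc)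
  then have "(cmp E u f, cmp E g v) \<in> Conf"
    by (intro conflation_iso_closed[OF c, where a = "ident E (src E f)" and b = u and c = "ident E (tgt E g)"])
      (use C(1-3) u' u v ident_iso in simp_all)
  then show ?thesis by (auto simp: inflation_def)
qed

lemma pushout_cokernel_iso:
  assumes c: "(k, p) \<in> Conf" and po: "is_pushout E k s q' i'" and c': "(i', g) \<in> Conf"
    and q': "deflation E Conf q'"
  obtains w where "is_iso E w" "src E w = tgt E p" "tgt E w = tgt E g"
proof -
  note C = conflationD[OF c] and C' = conflationD[OF c'] and S = pushout_square[OF po]
  obtain w' where w': "w' \<in> arr E" "src E w' = tgt E q'" "tgt E w' = tgt E p"
    "cmp E w' q' = p" "cmp E w' i' = zro E (tgt E s) (tgt E p)"
    by (rule pushout_factor[OF po, of p "zro E (tgt E s) (tgt E p)"]) (use C S in auto)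
  obtain w'' where w'': "w'' \<in> arr E" "src E w'' = tgt E g" "tgt E w'' = tgt E p" "cmp E w'' g = w'"
    by (rule cokernel_factor[OF conflation_cokernel[OF c'], of w']) (use w' C' S in auto)
  have "cmp E (cmp E g q') k = cmp E (cmp E g i') s"
    using C C'(1-3) S by (simp add: comp_assoc)
  also have "\<dots> = zro E (src E k) (tgt E g)" using C C' S by simp
  finally have gqk: "cmp E (cmp E g q') k = zro E (src E k) (tgt E g)" .
  obtain w where w: "w \<in> arr E" "src E w = tgt E p" "tgt E w = tgt E g" "cmp E w p = cmp E g q'"
    by (rule cokernel_factor[OF conflation_cokernel[OF c], of "cmp E g q'"]) (use gqk C C' S in auto)
  have ww': "cmp E w w' = g"
    by (rule jointly_epicD[OF deflation_epic[OF q']]) (use w w' C' S in \<open>simp_all add: comp_assoc\<close>)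
  have w''w: "cmp E w w'' = ident E (tgt E g)"
    by (rule jointly_epicD[OF conflation_cokernel[OF c', THEN cokernel_epic]])
      (use w w'' ww' C' S in \<open>simp_all add: comp_assoc\<close>)
  have w''wp: "cmp E (cmp E w'' w) p = cmp E (cmp E w'' g) q'"
    using w w''(1-3) C C'(1-3) S by (simp add: comp_assoc)
  have "cmp E w'' w = ident E (tgt E p)"
    by (rule jointly_epicD[OF conflation_cokernel[OF c, THEN cokernel_epic]])
      (use w''wp w w' w'' C in simp_all)
  then show thesis using that iso_intro[of w w''] w''w w w'' by simp
qed

lemma deflation_factor_through_monic:
  assumes d: "deflation E Conf d" and j: "monic E j" "j \<in> arr E"
    and h: "h \<in> arr E" "src E h = src E d" "tgt E h = src E j"
    and m: "m \<in> arr E" "src E m = tgt E d" "tgt E m = tgt E j" and jh: "cmp E j h = cmp E m d"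
  obtains \<delta> where "\<delta> \<in> arr E" "src E \<delta> = tgt E d" "tgt E \<delta> = tgt E h" "cmp E \<delta> d = h"
proof -
  obtain k where c: "(k, d) \<in> Conf" using d by (auto simp: deflation_def)
  note C = conflationD[OF c]
  have "cmp E j (cmp E h k) = cmp E (cmp E j h) k" using C h j(2) by (simp add: comp_assoc)
  also have "\<dots> = cmp E m (cmp E d k)" using C m by (simp add: jh comp_assoc)
  also have "\<dots> = cmp E j (zro E (src E k) (tgt E h))" using C h m j(2) by simp
  finally have jhk: "cmp E j (cmp E h k) = cmp E j (zro E (src E k) (tgt E h))" .
  have "cmp E h k = zro E (src E k) (tgt E h)"
    by (rule jointly_monicD[OF j(1)]) (use jhk C h j(2) in simp_all)
  then show thesis using cokernel_factor[OF conflation_cokernel[OF c], of h] that h C by auto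
qed

lemma chain_map_deflation_monic_factor:
  assumes f: "is_chain_map E X Y f" and d: "\<And>n. deflation E Conf (d n)" "\<And>n. src E (d n) = fst X n"
    and j: "\<And>n. monic E (j n)" "\<And>n. j n \<in> hom E (tgt E (d n)) (fst Y n)"
    and fjd: "\<And>n. f n = cmp E (j n) (d n)"
  obtains \<delta> where "is_chain_map E X (\<lambda>n. tgt E (d n), \<delta>) d" "is_chain_map E (\<lambda>n. tgt E (d n), \<delta>) Y j"
proof -
  note F = chain_mapD[OF f] and d' = deflation_arr[OF d(1)]
  have jd: "cmp E (j (n + 1)) (cmp E (d (n + 1)) (snd X n)) = cmp E (cmp E (snd Y n) (j n)) (d n)" for n
  proof -
    have "cmp E (j (n + 1)) (cmp E (d (n + 1)) (snd X n)) = cmp E (f (n + 1)) (snd X n)"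
      using F(1-5) j d d' by (simp add: fjd flip: comp_assoc)
    also have "\<dots> = cmp E (snd Y n) (f n)" using F by simp
    also have "\<dots> = cmp E (cmp E (snd Y n) (j n)) (d n)"
      using F(1-5) j d d' by (simp add: fjd comp_assoc)
    finally show ?thesis .
  qed
  have "\<exists>\<delta>. \<delta> \<in> hom E (tgt E (d n)) (tgt E (d (n + 1))) \<and> cmp E \<delta> (d n) = cmp E (d (n + 1)) (snd X n)" for n
    by (rule deflation_factor_through_monic[OF d(1)[of n] j(1)[of "n + 1"], where h = "cmp E (d (n + 1)) (snd X n)" and m = "cmp E (snd Y n) (j n)"])
      (use jd F(1-5) j d d' in auto)
  then obtain \<delta> where \<delta>: "\<And>n. \<delta> n \<in> hom E (tgt E (d n)) (tgt E (d (n + 1)))"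
    and \<delta>d: "\<And>n. cmp E (\<delta> n) (d n) = cmp E (d (n + 1)) (snd X n)" by metis
  have D: "is_chain_map E X (\<lambda>n. tgt E (d n), \<delta>) d"
    using bcomplex_from_jointly_epic[OF F(1) F(1) _ _ \<delta> \<delta>d \<delta>d deflation_epic[OF d(1)]] d d' by simp
  have "is_chain_map E (\<lambda>n. tgt E (d n), \<delta>) Y j"
    by (rule chain_map_from_jointly_epic[OF D D deflation_epic[OF d(1)]])
      (use j F(2) f fjd[symmetric] in simp_all)
  then show thesis using that D by blast
qed

lemma chain_map_factor_through_deflation:
  assumes e: "is_chain_map E X B e" "\<And>n. deflation E Conf (e n)" and h: "is_chain_map E X Y h"
    and fac: "\<And>n. factors_through E (h n) (e n)"
  obtains k where "is_chain_map E B Y k" "\<And>n. h n = cmp E (k n) (e n)"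
proof -
  have "\<exists>k. k \<in> hom E (fst B n) (fst Y n) \<and> h n = cmp E k (e n)" for n
    using fac[of n] chain_mapD[OF h] chain_mapD[OF e(1)] unfolding factors_through_def by auto
  then obtain k where k: "\<And>n. k n \<in> hom E (fst B n) (fst Y n)" and hk: "\<And>n. h n = cmp E (k n) (e n)"
    by metis
  have "is_chain_map E B Y k"
    by (rule chain_map_from_jointly_epic[OF e(1) e(1) deflation_epic[OF e(2)] k chain_map_tgt_bcomplex[OF h]])
      (use h hk[symmetric] in simp_all)
  then show thesis using that hk by blast
qed

lemma Cb_conf_iff:
  "((X, Y, f), (Y', Z, g)) \<in> Cb_conf E Conf \<longleftrightarrow>
     is_chain_map E X Y f \<and> is_chain_map E Y' Z g \<and> Y' = Y \<and> (\<forall>n. (f n, g n) \<in> Conf)"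
  by (auto simp: Cb_conf_def)

lemma Cb_iso_component: assumes "is_iso (Cb E) (X, Y, u)" shows "is_iso E (u n)"
proof -
  obtain v where "is_chain_map E X Y u" "v \<in> hom (Cb E) Y X"
    "cmp (Cb E) v (X, Y, u) = ident (Cb E) X" "cmp (Cb E) (X, Y, u) v = ident (Cb E) Y"
    using assms by (auto simp: is_iso_def)
  then show ?thesis
    by (cases v) (auto simp: fun_eq_iff chain_mapD intro!: iso_intro[of "u n" "snd (snd v) n"])
qed

lemma Cb_conflation_category: "conflation_category (Cb E) (Cb_conf E Conf)"
  unfolding conflation_category_def
proof (intro conjI allI impI Cb_additive)
  fix m m' assume "(m, m') \<in> Cb_conf E Conf"
  then obtain X Y Z f g where mm: "m = (X, Y, f)" "m' = (Y, Z, g)" and f: "is_chain_map E X Y f"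
    and g: "is_chain_map E Y Z g" and c: "\<And>n. (f n, g n) \<in> Conf"
    by (cases m, cases m') (auto simp: Cb_conf_iff)
  show "kernel_cokernel_pair (Cb E) m m'"
    unfolding kernel_cokernel_pair_def mm
    using Cb_is_kernel[OF f g conflation_kernel[OF c]] Cb_is_cokernel[OF f g conflation_cokernel[OF c]] by simp
next
  fix m m' k k' a b c
  assume conf: "(m, m') \<in> Cb_conf E Conf" and k: "k \<in> arr (Cb E)" "k' \<in> arr (Cb E)"
    "tgt (Cb E) k = src (Cb E) k'"
    and abc: "a \<in> hom (Cb E) (src (Cb E) m) (src (Cb E) k)" "b \<in> hom (Cb E) (tgt (Cb E) m) (tgt (Cb E) k)"
    "c \<in> hom (Cb E) (tgt (Cb E) m') (tgt (Cb E) k')"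
    and iso: "is_iso (Cb E) a" "is_iso (Cb E) b" "is_iso (Cb E) c"
    and sq: "cmp (Cb E) b m = cmp (Cb E) k a" "cmp (Cb E) c m' = cmp (Cb E) k' b"
  obtain X Y Z f g where mm: "m = (X, Y, f)" "m' = (Y, Z, g)" and c0: "\<And>n. (f n, g n) \<in> Conf"
    and f: "is_chain_map E X Y f" and g: "is_chain_map E Y Z g"
    using conf by (cases m, cases m') (auto simp: Cb_conf_iff)
  obtain X' Y' Z' f' g' where kk: "k = (X', Y', f')" "k' = (Y', Z', g')"
    and f': "is_chain_map E X' Y' f'" and g': "is_chain_map E Y' Z' g'"
    using k by (cases k, cases k') auto
  obtain a' b' c' where aa: "a = (X, X', a')" "b = (Y, Y', b')" "c = (Z, Z', c')"
    and a': "is_chain_map E X X' a'" and b': "is_chain_map E Y Y' b'" and c': "is_chain_map E Z Z' c'"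
    using abc mm kk by (cases a, cases b, cases c) auto
  have "(f' n, g' n) \<in> Conf" for n
  proof (rule conflation_iso_closed[OF c0, where a = "a' n" and b = "b' n" and c = "c' n"])
    show "is_iso E (a' n)" "is_iso E (b' n)" "is_iso E (c' n)"
      using iso aa Cb_iso_component by blast+
    show "cmp E (b' n) (f n) = cmp E (f' n) (a' n)" "cmp E (c' n) (g n) = cmp E (g' n) (b' n)"
      using sq mm kk aa by (simp_all add: fun_eq_iff)
  qed (use f g f' g' a' b' c' in \<open>simp_all add: chain_mapD\<close>)
  then show "(k, k') \<in> Cb_conf E Conf" using kk f' g' by (simp add: Cb_conf_iff)
qed

lemma Cb_deflation_iff:
  "deflation (Cb E) (Cb_conf E Conf) (X, Y, g) \<longleftrightarrow> is_chain_map E X Y g \<and> (\<forall>n. deflation E Conf (g n))"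
proof
  assume "deflation (Cb E) (Cb_conf E Conf) (X, Y, g)"
  then obtain m where "(m, (X, Y, g)) \<in> Cb_conf E Conf" by (auto simp: deflation_def)
  then show "is_chain_map E X Y g \<and> (\<forall>n. deflation E Conf (g n))"
    by (cases m) (auto simp: Cb_conf_iff deflation_def)
next
  assume "is_chain_map E X Y g \<and> (\<forall>n. deflation E Conf (g n))"
  then have g: "is_chain_map E X Y g" and "\<And>n. \<exists>f. (f, g n) \<in> Conf" by (auto simp: deflation_def)
  then obtain f where c: "\<And>n. (f n, g n) \<in> Conf" by metis
  note G = chain_mapD[OF g] and C = conflationD[OF c]
  have gdf: "cmp E (g (n + 1)) (cmp E (snd X n) (f n)) = zro E (src E (f n)) (fst Y (n + 1))" for n
  proof -
    have "cmp E (g (n + 1)) (cmp E (snd X n) (f n)) = cmp E (cmp E (snd Y n) (g n)) (f n)"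
      using G C by (simp flip: comp_assoc)
    also have "\<dots> = zro E (src E (f n)) (fst Y (n + 1))"
      using G(1-5) C by (simp add: comp_assoc)
    finally show ?thesis .
  qed
  have "\<exists>d. d \<in> hom E (src E (f n)) (src E (f (n + 1))) \<and> cmp E (snd X n) (f n) = cmp E (f (n + 1)) d" for n
    by (rule kernel_factor[OF conflation_kernel[OF c[of "n + 1"]], of "cmp E (snd X n) (f n)"])
      (use G C gdf in auto)
  then obtain d where d: "\<And>n. d n \<in> hom E (src E (f n)) (src E (f (n + 1)))"
    and fd: "\<And>n. cmp E (snd X n) (f n) = cmp E (f (n + 1)) (d n)" by metis
  have "inflation E Conf (f n)" for n using c by (auto simp: inflation_def)
  then have f: "is_chain_map E (\<lambda>n. src E (f n), d) X f"
    using bcomplex_from_jointly_monic[OF G(1) G(1) _ _ d fd fd inflation_monic] G C by simp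
  have "(((\<lambda>n. src E (f n), d), X, f), (X, Y, g)) \<in> Cb_conf E Conf"
    using f g c by (simp add: Cb_conf_iff)
  then show "deflation (Cb E) (Cb_conf E Conf) (X, Y, g)" unfolding deflation_def by blast
qed

lemma Cb_inflation_iff:
  "inflation (Cb E) (Cb_conf E Conf) (X, Y, f) \<longleftrightarrow> is_chain_map E X Y f \<and> (\<forall>n. inflation E Conf (f n))"
proof
  assume "inflation (Cb E) (Cb_conf E Conf) (X, Y, f)"
  then obtain m where "((X, Y, f), m) \<in> Cb_conf E Conf" by (auto simp: inflation_def)
  then show "is_chain_map E X Y f \<and> (\<forall>n. inflation E Conf (f n))"
    by (cases m) (auto simp: Cb_conf_iff inflation_def)
next
  assume "is_chain_map E X Y f \<and> (\<forall>n. inflation E Conf (f n))"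
  then have f: "is_chain_map E X Y f" and "\<And>n. \<exists>g. (f n, g) \<in> Conf" by (auto simp: inflation_def)
  then obtain g where c: "\<And>n. (f n, g n) \<in> Conf" by metis
  note F = chain_mapD[OF f] and C = conflationD[OF c]
  have gdf: "cmp E (cmp E (g (n + 1)) (snd Y n)) (f n) = zro E (fst X n) (tgt E (g (n + 1)))" for n
  proof -
    have "cmp E (cmp E (g (n + 1)) (snd Y n)) (f n) = cmp E (g (n + 1)) (cmp E (f (n + 1)) (snd X n))"
      using F C by (simp add: comp_assoc)
    also have "\<dots> = zro E (fst X n) (tgt E (g (n + 1)))"
      using F C by (simp flip: comp_assoc)
    finally show ?thesis .
  qed
  have "\<exists>d. d \<in> hom E (tgt E (g n)) (tgt E (g (n + 1))) \<and> cmp E d (g n) = cmp E (g (n + 1)) (snd Y n)" for n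
    by (rule cokernel_factor[OF conflation_cokernel[OF c[of n]], of "cmp E (g (n + 1)) (snd Y n)"])
      (use F C gdf in auto)
  then obtain d where d: "\<And>n. d n \<in> hom E (tgt E (g n)) (tgt E (g (n + 1)))"
    and dg: "\<And>n. cmp E (d n) (g n) = cmp E (g (n + 1)) (snd Y n)" by metis
  have "deflation E Conf (g n)" for n using c by (auto simp: deflation_def)
  then have g: "is_chain_map E Y (\<lambda>n. tgt E (g n), d) g"
    using bcomplex_from_jointly_epic[OF F(2) F(2) _ _ d dg dg deflation_epic] F C by simp
  have "((X, Y, f), (Y, (\<lambda>n. tgt E (g n), d), g)) \<in> Cb_conf E Conf"
    using f g c by (simp add: Cb_conf_iff)
  then show "inflation (Cb E) (Cb_conf E Conf) (X, Y, f)" unfolding inflation_def by blast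
qed

lemma Cb_deflation_inflation_factor:
  assumes f: "is_chain_map E X Y f" and d: "\<And>n. deflation E Conf (d n)" "\<And>n. src E (d n) = fst X n"
    and j: "\<And>n. inflation E Conf (j n)" "\<And>n. j n \<in> hom E (tgt E (d n)) (fst Y n)"
    and fjd: "\<And>n. f n = cmp E (j n) (d n)"
  obtains \<delta> where "deflation (Cb E) (Cb_conf E Conf) (X, (\<lambda>n. tgt E (d n), \<delta>), d)"
    "inflation (Cb E) (Cb_conf E Conf) ((\<lambda>n. tgt E (d n), \<delta>), Y, j)"
proof -
  obtain \<delta> where "is_chain_map E X (\<lambda>n. tgt E (d n), \<delta>) d" "is_chain_map E (\<lambda>n. tgt E (d n), \<delta>) Y j"
    by (rule chain_map_deflation_monic_factor[OF f d inflation_monic[OF j(1)] j(2) fjd])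
  then show thesis using that d j by (simp add: Cb_deflation_iff Cb_inflation_iff)
qed

lemma Cb_deflation_comp_iso:
  assumes q: "deflation (Cb E) (Cb_conf E Conf) q" and w: "is_iso (Cb E) w" "tgt (Cb E) w = src (Cb E) q"
  shows "deflation (Cb E) (Cb_conf E Conf) (cmp (Cb E) q w)"
proof -
  obtain X Y W q' w' where qw: "q = (X, Y, q')" "w = (W, X, w')" and q': "is_chain_map E X Y q'"
    "\<And>n. deflation E Conf (q' n)" and w': "is_chain_map E W X w'"
    using q w by (cases q, cases w) (auto simp: Cb_deflation_iff is_iso_def)
  have "deflation E Conf (cmp E (q' n) (w' n))" for n
    using deflation_comp_iso[OF q'(2) Cb_iso_component[OF w(1)[unfolded qw]]] chain_mapD[OF q'(1)] chain_mapD[OF w'] by simp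
  then show ?thesis using qw q' w' by (simp add: Cb_deflation_iff chain_map_comp)
qed

lemma Cb_iso_comp_deflation:
  assumes q: "deflation (Cb E) (Cb_conf E Conf) q" and w: "is_iso (Cb E) w" "src (Cb E) w = tgt (Cb E) q"
  shows "deflation (Cb E) (Cb_conf E Conf) (cmp (Cb E) w q)"
proof -
  obtain X Y W q' w' where qw: "q = (X, Y, q')" "w = (Y, W, w')" and q': "is_chain_map E X Y q'"
    "\<And>n. deflation E Conf (q' n)" and w': "is_chain_map E Y W w'"
    using q w by (cases q, cases w) (auto simp: Cb_deflation_iff is_iso_def)
  have "deflation E Conf (cmp E (w' n) (q' n))" for n
    using iso_comp_deflation[OF q'(2) Cb_iso_component[OF w(1)[unfolded qw]]] chain_mapD[OF q'(1)] chain_mapD[OF w'] by simp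
  then show ?thesis using qw q' w' by (simp add: Cb_deflation_iff chain_map_comp)
qed

lemma Cb_iso_comp_inflation:
  assumes i: "inflation (Cb E) (Cb_conf E Conf) i" and w: "is_iso (Cb E) w" "src (Cb E) w = tgt (Cb E) i"
  shows "inflation (Cb E) (Cb_conf E Conf) (cmp (Cb E) w i)"
proof -
  obtain X Y W i' w' where iw: "i = (X, Y, i')" "w = (Y, W, w')" and i': "is_chain_map E X Y i'"
    "\<And>n. inflation E Conf (i' n)" and w': "is_chain_map E Y W w'"
    using i w by (cases i, cases w) (auto simp: Cb_inflation_iff is_iso_def)
  have "inflation E Conf (cmp E (w' n) (i' n))" for n
    using iso_comp_inflation[OF i'(2) Cb_iso_component[OF w(1)[unfolded iw]]] chain_mapD[OF i'(1)] chain_mapD[OF w'] by simp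
  then show ?thesis using iw i' w' by (simp add: Cb_inflation_iff chain_map_comp)
qed

lemma Cb_deflation_pullback:
  assumes m: "deflation (Cb E) (Cb_conf E Conf) m" and t: "t \<in> arr (Cb E)" "tgt (Cb E) t = tgt (Cb E) m"
  obtains p q where "is_pullback (Cb E) m t p q" "deflation (Cb E) (Cb_conf E Conf) q"
proof -
  obtain B C g C' t' where mt: "m = (B, C, g)" "t = (C', C, t')" and g: "is_chain_map E B C g"
    and t': "is_chain_map E C' C t'" and gd: "\<And>n. deflation E Conf (g n)"
    using m t by (cases m, cases t) (auto simp: Cb_deflation_iff)
  note G = chain_mapD[OF g] and T = chain_mapD[OF t']
  have "\<exists>p q. is_pullback E (g n) (t' n) p q" for n
    using pullback_exists[OF gd] G T by simp
  then obtain P p q where pb: "is_pullback (Cb E) m t (P, B, p) (P, C', q)"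
    and pbn: "\<And>n. is_pullback E (g n) (t' n) (p n) (q n)"
    using Cb_pullback_exists[OF g t'] mt by metis
  have "is_chain_map E P C' q" using Cb.pullback_square[OF pb] mt by simp
  moreover have "deflation E Conf (q n)" for n using pullback_deflation[OF gd _ _ pbn] G T by simp
  ultimately show thesis using that pb by (simp add: Cb_deflation_iff)
qed

lemma Cb_right_exact: "right_exact (Cb E) (Cb_conf E Conf)"
  unfolding right_exact_def
proof (intro conjI allI impI Cb_conflation_category)
  fix Z assume "is_zero_obj (Cb E) Z"
  then show "deflation (Cb E) (Cb_conf E Conf) (ident (Cb E) Z)"
    by (simp add: Cb_zero_obj_iff Cb_deflation_iff chain_map_ident zero_obj_ident_deflation)
next
  fix m m' assume "deflation (Cb E) (Cb_conf E Conf) m" "deflation (Cb E) (Cb_conf E Conf) m'"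
    "tgt (Cb E) m = src (Cb E) m'"
  then show "deflation (Cb E) (Cb_conf E Conf) (cmp (Cb E) m' m)"
    by (cases m, cases m') (auto simp: Cb_deflation_iff chain_map_comp chain_mapD intro: deflation_comp)
next
  fix m t assume "deflation (Cb E) (Cb_conf E Conf) m" "t \<in> arr (Cb E)" "tgt (Cb E) t = tgt (Cb E) m"
  then show "\<exists>p q. is_pullback (Cb E) m t p q" using Cb_deflation_pullback by metis
next
  fix m t p q assume m: "deflation (Cb E) (Cb_conf E Conf) m" and t: "t \<in> arr (Cb E)"
    "tgt (Cb E) t = tgt (Cb E) m" and pb: "is_pullback (Cb E) m t p q"
  obtain p0 q0 where pb0: "is_pullback (Cb E) m t p0 q0" and q0: "deflation (Cb E) (Cb_conf E Conf) q0"
    by (rule Cb_deflation_pullback[OF m t])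
  obtain w where "is_iso (Cb E) w" "tgt (Cb E) w = src (Cb E) p0" "cmp (Cb E) q0 w = q"
    by (rule Cb.pullback_unique_iso[OF pb pb0])
  then show "deflation (Cb E) (Cb_conf E Conf) q"
    using Cb_deflation_comp_iso[OF q0] Cb.pullback_square[OF pb0] by metis
qed

end

locale right_percolating_sub = right_exact_cat +
  fixes A :: "'o set"
  assumes right_percolating: "right_percolating E Conf A"
begin

abbreviation A_deflation where
  "A_deflation e X \<equiv> deflation E Conf e \<and> src E e = X \<and> tgt E e \<in> A"

lemma A_nonempty: "A \<noteq> {}"
  and A_subset: "A \<subseteq> obj E"
  and conflation_mem_iff: "(f, g) \<in> Conf \<Longrightarrow> src E g \<in> A \<longleftrightarrow> src E f \<in> A \<and> tgt E g \<in> A"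
  using right_percolating by (simp_all add: right_percolating_def)

lemma ex_A_deflation_factor:
  assumes "h \<in> arr E" "tgt E h \<in> A" shows "\<exists>d. A_deflation d (src E h) \<and> factors_through E h d"
proof -
  have "\<exists>A' d k. A' \<in> A \<and> d \<in> hom E (src E h) A' \<and> deflation E Conf d \<and>
      k \<in> hom E A' (tgt E h) \<and> h = cmp E k d"
    using right_percolating assms unfolding right_percolating_def by blast
  then show ?thesis unfolding factors_through_def by auto
qed

lemma pushout_exists:
  "inflation E Conf i \<Longrightarrow> deflation E Conf q \<Longrightarrow> src E i = src E q \<Longrightarrow> tgt E q \<in> A \<Longrightarrow>
   \<exists>q' i'. is_pushout E i q q' i'"
  and pushout_inflation_deflation:
  "inflation E Conf i \<Longrightarrow> deflation E Conf q \<Longrightarrow> src E i = src E q \<Longrightarrow> tgt E q \<in> A \<Longrightarrow>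
   is_pushout E i q q' i' \<Longrightarrow> inflation E Conf i' \<and> deflation E Conf q'"
  using right_percolating unfolding right_percolating_def by blast+

lemma inflation_deflation_factor:
  assumes "inflation E Conf i" "deflation E Conf p" "tgt E i = src E p" "src E i \<in> A" "tgt E p \<in> A"
  shows "\<exists>d1 d2 j. A_deflation d1 (src E i) \<and> A_deflation d2 (tgt E i) \<and> inflation E Conf j \<and>
    j \<in> hom E (tgt E d1) (tgt E d2) \<and> cmp E d2 i = cmp E j d1 \<and> factors_through E p d2"
proof -
  have "\<exists>A' B' d1 d2 j k. A' \<in> A \<and> B' \<in> A \<and>
      d1 \<in> hom E (src E i) A' \<and> deflation E Conf d1 \<and> d2 \<in> hom E (tgt E i) B' \<and> deflation E Conf d2 \<and>
      j \<in> hom E A' B' \<and> inflation E Conf j \<and> k \<in> hom E B' (tgt E p) \<and>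
      cmp E d2 i = cmp E j d1 \<and> p = cmp E k d2"
    using right_percolating assms unfolding right_percolating_def by blast
  then show ?thesis unfolding factors_through_def by auto
qed

lemma iso_mem: assumes "is_iso E u" "src E u \<in> A" shows "tgt E u \<in> A"
proof -
  obtain k where "(k, u) \<in> Conf" using iso_deflation[OF assms(1)] by (auto simp: deflation_def)
  then show ?thesis using conflation_mem_iff assms(2) by blast
qed

lemma zero_obj_mem: assumes z: "is_zero_obj E z" shows "z \<in> A"
proof -
  obtain a where a: "a \<in> A" using A_nonempty by blast
  have z': "z \<in> obj E" using z by (simp add: zero_obj_iff)
  have "zro E z a \<in> arr E" "src E (zro E z a) = z" "tgt E (zro E z a) \<in> A"
    using a A_subset z' by auto
  then obtain d where d: "A_deflation d z"
    using ex_A_deflation_factor[of "zro E z a"] by auto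
  have "is_zero_obj E (tgt E d)"
    using jointly_epic_zero_obj[OF deflation_epic] deflation_arr d z by simp
  then show ?thesis using iso_mem[OF zro_iso[OF _ z], of "tgt E d"] d z' by (simp add: zero_obj_iff)
qed

lemma ex_common_deflation:
  assumes u: "u \<in> arr E" "tgt E u \<in> A" and v: "v \<in> arr E" "src E v = src E u" "tgt E v \<in> A"
  shows "\<exists>e. A_deflation e (src E u) \<and> factors_through E u e \<and> factors_through E v e"
proof -
  obtain p where p: "A_deflation p (src E u)" "factors_through E u p"
    using ex_A_deflation_factor[OF u] by blast
  obtain q where q: "A_deflation q (src E u)" "factors_through E v q"
    using ex_A_deflation_factor[OF v(1,3)] v(2) by auto
  obtain k where c: "(k, p) \<in> Conf" using p by (auto simp: deflation_def)
  note C = conflationD[OF c] and pq = deflation_arr[of p] deflation_arr[of q]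
  obtain s where s: "A_deflation s (src E k)" "factors_through E (cmp E q k) s"
    using ex_A_deflation_factor[of "cmp E q k"] C p q pq by auto
  then obtain t where t: "t \<in> hom E (tgt E s) (tgt E q)" "cmp E q k = cmp E t s"
    using C p q pq by (auto simp: factors_through_def)
  have k: "inflation E Conf k" using c by (auto simp: inflation_def)
  obtain e i' where po: "is_pushout E k s e i'"
    using pushout_exists[OF k, of s] s by auto
  have e: "deflation E Conf e" and i': "inflation E Conf i'"
    using pushout_inflation_deflation[OF k _ _ _ po] s by auto
  note S = pushout_square[OF po]
  obtain g where c': "(i', g) \<in> Conf" using i' by (auto simp: inflation_def)
  obtain w where "is_iso E w" "src E w = tgt E p" "tgt E w = tgt E g"
    by (rule pushout_cokernel_iso[OF c po c' e])
  then have "tgt E g \<in> A" using iso_mem p by metis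
  then have eA: "tgt E e \<in> A"
    using conflation_mem_iff[OF c'] s S conflationD[OF c'] by simp
  obtain w' where "w' \<in> arr E" "src E w' = tgt E e" "tgt E w' = tgt E p" "cmp E w' e = p"
    by (rule pushout_factor[OF po, of p "zro E (tgt E s) (tgt E p)"]) (use C S p pq in auto)
  then have "factors_through E p e" unfolding factors_through_def by auto
  moreover obtain w'' where "w'' \<in> arr E" "src E w'' = tgt E e" "tgt E w'' = tgt E q" "cmp E w'' e = q"
    by (rule pushout_factor[OF po, of q t]) (use C S p q pq t in auto)
  then have "factors_through E q e" unfolding factors_through_def by auto
  ultimately show ?thesis
    using e eA S C p q factors_through_trans by auto
qed

lemma ex_compatible_deflation:
  assumes i: "inflation E Conf i" "src E i \<in> A"
    and h: "h \<in> arr E" "src E h = tgt E i" "tgt E h \<in> A"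
    and v: "v \<in> arr E" "src E v = tgt E i" "tgt E v \<in> A"
  shows "\<exists>e. A_deflation e (tgt E i) \<and> factors_through E h e \<and> factors_through E v e \<and>
    (\<exists>d j. A_deflation d (src E i) \<and> inflation E Conf j \<and> j \<in> hom E (tgt E d) (tgt E e) \<and>
       cmp E e i = cmp E j d)"
proof -
  obtain g where g: "A_deflation g (tgt E i)" "factors_through E h g" "factors_through E v g"
    using ex_common_deflation[OF h(1,3) v(1) _ v(3)] h v by auto
  have "\<exists>d e j. A_deflation d (src E i) \<and> A_deflation e (tgt E i) \<and> inflation E Conf j \<and>
    j \<in> hom E (tgt E d) (tgt E e) \<and> cmp E e i = cmp E j d \<and> factors_through E g e"
    using inflation_deflation_factor[OF i(1), of g] i(2) g by simp
  then obtain d e j where "A_deflation d (src E i)" "A_deflation e (tgt E i)" "inflation E Conf j"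
    "j \<in> hom E (tgt E d) (tgt E e)" "cmp E e i = cmp E j d" "factors_through E g e"
    by blast
  then show ?thesis using g factors_through_trans deflation_arr by blast
qed

lemma ex_quotient_complex:
  assumes X: "is_bcomplex E X"
    and G: "\<And>n e. G n e \<Longrightarrow> A_deflation e (fst X n)"
    and base: "\<And>n. is_zero_obj E (fst X n) \<Longrightarrow> G n (ident E (fst X n))"
    and step: "\<And>n e'. G (n + 1) e' \<Longrightarrow> \<exists>e. G n e \<and> factors_through E (cmp E e' (snd X n)) e"
  obtains e d where "\<And>n. G n (e n)" "(\<lambda>n. tgt E (e n), d) \<in> Cb_sub E A"
    "deflation (Cb E) (Cb_conf E Conf) (X, (\<lambda>n. tgt E (e n), d), e)"
proof -
  obtain N where N: "\<And>n. N < \<bar>n\<bar> \<Longrightarrow> is_zero_obj E (fst X n)" using bcomplex_bounded[OF X] by blast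
  obtain e where Ge: "\<And>n. G n (e n)" and Re: "\<And>n. factors_through E (cmp E (e (n + 1)) (snd X n)) (e n)"
  proof (rule int_downward_choice[of N G "\<lambda>n. ident E (fst X n)"])
    show "G n (ident E (fst X n)) \<and>
      factors_through E (cmp E (ident E (fst X (n + 1))) (snd X n)) (ident E (fst X n))" if "N < n" for n
      using base N that X by (auto simp: factors_through_def intro!: exI[of _ "snd X n"])
  qed (use step in blast)+
  have e: "deflation E Conf (e n)" "src E (e n) = fst X n" "tgt E (e n) \<in> A" "e n \<in> arr E" for n
    using G[OF Ge] deflation_arr by blast+
  have "\<exists>d. d \<in> hom E (tgt E (e n)) (tgt E (e (n + 1))) \<and> cmp E d (e n) = cmp E (e (n + 1)) (snd X n)" for n
    using Re[of n] e X unfolding factors_through_def by auto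
  then obtain d where d: "\<And>n. d n \<in> hom E (tgt E (e n)) (tgt E (e (n + 1)))"
    and de: "\<And>n. cmp E (d n) (e n) = cmp E (e (n + 1)) (snd X n)" by metis
  have "is_bcomplex E (\<lambda>n. tgt E (e n), d)" "is_chain_map E X (\<lambda>n. tgt E (e n), d) e"
    using bcomplex_from_jointly_epic[OF X X _ _ d de de deflation_epic[OF e(1)]] e by simp_all
  then show thesis
    using that[OF Ge] e by (simp add: Cb_sub_def Cb_deflation_iff)
qed

lemma Cb_deflation_factor:
  assumes "h \<in> arr (Cb E)" "tgt (Cb E) h \<in> Cb_sub E A"
  shows "\<exists>B d k. B \<in> Cb_sub E A \<and> d \<in> hom (Cb E) (src (Cb E) h) B \<and>
    deflation (Cb E) (Cb_conf E Conf) d \<and> k \<in> hom (Cb E) B (tgt (Cb E) h) \<and> h = cmp (Cb E) k d"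
proof -
  obtain X Y h' where hh: "h = (X, Y, h')" and h': "is_chain_map E X Y h'" and Y: "Y \<in> Cb_sub E A"
    using assms by (cases h) auto
  note H = chain_mapD[OF h']
  have YA: "fst Y n \<in> A" for n using Y by (simp add: Cb_sub_def)
  obtain e d where Ge: "\<And>n. A_deflation (e n) (fst X n) \<and> factors_through E (h' n) (e n)"
    and B: "(\<lambda>n. tgt E (e n), d) \<in> Cb_sub E A"
    and e: "deflation (Cb E) (Cb_conf E Conf) (X, (\<lambda>n. tgt E (e n), d), e)"
  proof (rule ex_quotient_complex[OF H(1)])
    show "A_deflation (ident E (fst X n)) (fst X n) \<and> factors_through E (h' n) (ident E (fst X n))"
      if "is_zero_obj E (fst X n)" for n
      using ident_deflation zero_obj_mem[OF that] H
      by (auto simp: factors_through_def intro!: exI[of _ "h' n"])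
    show "\<exists>e. (A_deflation e (fst X n) \<and> factors_through E (h' n) e) \<and>
      factors_through E (cmp E e' (snd X n)) e"
      if "A_deflation e' (fst X (n + 1)) \<and> factors_through E (h' (n + 1)) e'" for n e'
      using ex_common_deflation[of "h' n" "cmp E e' (snd X n)"] that H YA deflation_arr by auto
  qed blast+
  let ?B = "(\<lambda>n. tgt E (e n), d)"
  have ec: "is_chain_map E X ?B e" and ed: "\<And>n. deflation E Conf (e n)"
    using e by (simp_all add: Cb_deflation_iff)
  obtain k where "is_chain_map E ?B Y k" and hk: "\<And>n. h' n = cmp E (k n) (e n)"
    using chain_map_factor_through_deflation[OF ec ed h'] Ge by blast
  then have "(?B, Y, k) \<in> hom (Cb E) ?B (tgt (Cb E) h)" using hh by simp
  moreover have "(X, ?B, e) \<in> hom (Cb E) (src (Cb E) h) ?B" using ec hh by simp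
  moreover have "h = cmp (Cb E) (?B, Y, k) (X, ?B, e)" using hh hk by (simp add: fun_eq_iff)
  ultimately show ?thesis using B e by blast
qed

lemma ex_compatible_quotient:
  assumes i: "is_chain_map E S X i" "\<And>n. inflation E Conf (i n)" and S: "S \<in> Cb_sub E A"
    and p: "is_chain_map E X Y p" and Y: "Y \<in> Cb_sub E A"
  obtains e d where "(\<lambda>n. tgt E (e n), d) \<in> Cb_sub E A"
    "deflation (Cb E) (Cb_conf E Conf) (X, (\<lambda>n. tgt E (e n), d), e)"
    "\<And>n. factors_through E (p n) (e n)"
    "\<And>n. \<exists>d j. A_deflation d (fst S n) \<and> inflation E Conf j \<and> j \<in> hom E (tgt E d) (tgt E (e n)) \<and>
       cmp E (e n) (i n) = cmp E j d"
proof -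
  note I = chain_mapD[OF i(1)] and P = chain_mapD[OF p]
  have SA: "fst S n \<in> A" and YA: "fst Y n \<in> A" for n using S Y by (simp_all add: Cb_sub_def)
  let ?G = "\<lambda>n e. A_deflation e (fst X n) \<and> factors_through E (p n) e \<and>
    (\<exists>d j. A_deflation d (fst S n) \<and> inflation E Conf j \<and> j \<in> hom E (tgt E d) (tgt E e) \<and>
       cmp E e (i n) = cmp E j d)"
  obtain e d where "\<And>n. ?G n (e n)" "(\<lambda>n. tgt E (e n), d) \<in> Cb_sub E A"
    "deflation (Cb E) (Cb_conf E Conf) (X, (\<lambda>n. tgt E (e n), d), e)"
  proof (rule ex_quotient_complex[OF I(2)])
    show "?G n (ident E (fst X n))" if "is_zero_obj E (fst X n)" for n
    proof -
      have "A_deflation (ident E (fst S n)) (fst S n) \<and> inflation E Conf (i n) \<and>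
        i n \<in> hom E (tgt E (ident E (fst S n))) (tgt E (ident E (fst X n))) \<and>
        cmp E (ident E (fst X n)) (i n) = cmp E (i n) (ident E (fst S n))"
        using ident_deflation I SA i(2) inflation_arr[OF i(2)] by simp
      moreover have "A_deflation (ident E (fst X n)) (fst X n) \<and> factors_through E (p n) (ident E (fst X n))"
        using ident_deflation zero_obj_mem[OF that] I P
        by (auto simp: factors_through_def intro!: exI[of _ "p n"])
      ultimately show ?thesis by blast
    qed
    show "\<exists>e. ?G n e \<and> factors_through E (cmp E e' (snd X n)) e" if "?G (n + 1) e'" for n e'
      using ex_compatible_deflation[OF i(2), of n "p n" "cmp E e' (snd X n)"] that I P SA YA deflation_arr
      by auto
  qed blast+
  then show thesis using that by blast
qed

lemma Cb_inflation_deflation_factor: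
  assumes "inflation (Cb E) (Cb_conf E Conf) m" "deflation (Cb E) (Cb_conf E Conf) m'"
    "tgt (Cb E) m = src (Cb E) m'" "src (Cb E) m \<in> Cb_sub E A" "tgt (Cb E) m' \<in> Cb_sub E A"
  shows "\<exists>A' B d1 d2 j k. A' \<in> Cb_sub E A \<and> B \<in> Cb_sub E A \<and>
    d1 \<in> hom (Cb E) (src (Cb E) m) A' \<and> deflation (Cb E) (Cb_conf E Conf) d1 \<and>
    d2 \<in> hom (Cb E) (tgt (Cb E) m) B \<and> deflation (Cb E) (Cb_conf E Conf) d2 \<and>
    j \<in> hom (Cb E) A' B \<and> inflation (Cb E) (Cb_conf E Conf) j \<and> k \<in> hom (Cb E) B (tgt (Cb E) m') \<and>
    cmp (Cb E) d2 m = cmp (Cb E) j d1 \<and> m' = cmp (Cb E) k d2"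
proof -
  obtain S X Y i p where mm: "m = (S, X, i)" "m' = (X, Y, p)"
    and i: "is_chain_map E S X i" "\<And>n. inflation E Conf (i n)" and S: "S \<in> Cb_sub E A"
    and p: "is_chain_map E X Y p" and Y: "Y \<in> Cb_sub E A"
    using assms by (cases m, cases m') (auto simp: Cb_inflation_iff Cb_deflation_iff)
  obtain e d where B: "(\<lambda>n. tgt E (e n), d) \<in> Cb_sub E A"
    and e: "deflation (Cb E) (Cb_conf E Conf) (X, (\<lambda>n. tgt E (e n), d), e)"
    and pe: "\<And>n. factors_through E (p n) (e n)"
    and ie: "\<And>n. \<exists>d j. A_deflation d (fst S n) \<and> inflation E Conf j \<and> j \<in> hom E (tgt E d) (tgt E (e n)) \<and>
       cmp E (e n) (i n) = cmp E j d"
    by (rule ex_compatible_quotient[OF i S p Y]) blast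
  let ?B = "(\<lambda>n. tgt E (e n), d)"
  have ec: "is_chain_map E X ?B e" and ed: "\<And>n. deflation E Conf (e n)"
    using e by (simp_all add: Cb_deflation_iff)
  obtain k where kc: "is_chain_map E ?B Y k" and pk: "\<And>n. p n = cmp E (k n) (e n)"
    using chain_map_factor_through_deflation[OF ec ed p] pe by blast
  obtain d1 j where d1: "\<And>n. A_deflation (d1 n) (fst S n)"
    and j: "\<And>n. inflation E Conf (j n)" "\<And>n. j n \<in> hom E (tgt E (d1 n)) (tgt E (e n))"
    and sq: "\<And>n. cmp E (e n) (i n) = cmp E (j n) (d1 n)"
    using ie by metis
  obtain dA where d1c: "deflation (Cb E) (Cb_conf E Conf) (S, (\<lambda>n. tgt E (d1 n), dA), d1)"
    and jc: "inflation (Cb E) (Cb_conf E Conf) ((\<lambda>n. tgt E (d1 n), dA), ?B, j)"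
    by (rule Cb_deflation_inflation_factor[OF chain_map_comp[OF i(1) ec], of d1 j]) (use d1 j sq in simp_all)
  let ?A' = "(\<lambda>n. tgt E (d1 n), dA)"
  have "?A' \<in> Cb_sub E A" "(S, ?A', d1) \<in> hom (Cb E) (src (Cb E) m) ?A'"
    using chain_map_tgt_bcomplex[of S ?A' d1] d1c d1 mm by (simp_all add: Cb_sub_def Cb_deflation_iff)
  moreover have "(X, ?B, e) \<in> hom (Cb E) (tgt (Cb E) m) ?B" using ec mm by simp
  moreover have "(?A', ?B, j) \<in> hom (Cb E) ?A' ?B" using jc by (simp add: Cb_inflation_iff)
  moreover have "(?B, Y, k) \<in> hom (Cb E) ?B (tgt (Cb E) m')" using kc mm by simp
  moreover have "cmp (Cb E) (X, ?B, e) m = cmp (Cb E) (?A', ?B, j) (S, ?A', d1)"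
    "m' = cmp (Cb E) (?B, Y, k) (X, ?B, e)"
    using mm sq pk by (simp_all add: fun_eq_iff)
  ultimately show ?thesis using B e d1c jc by blast
qed

lemma Cb_pushout_of_A_deflation_exists:
  assumes i: "inflation (Cb E) (Cb_conf E Conf) m" and q: "deflation (Cb E) (Cb_conf E Conf) m'"
    and mm': "src (Cb E) m = src (Cb E) m'" and A: "tgt (Cb E) m' \<in> Cb_sub E A"
  obtains q' i' where "is_pushout (Cb E) m m' q' i'" "inflation (Cb E) (Cb_conf E Conf) i'"
    "deflation (Cb E) (Cb_conf E Conf) q'"
proof -
  obtain C D A' i0 q0 where mi: "m = (C, D, i0)" "m' = (C, A', q0)"
    and i0: "is_chain_map E C D i0" "\<And>n. inflation E Conf (i0 n)"
    and q0: "is_chain_map E C A' q0" "\<And>n. deflation E Conf (q0 n)"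
    using i q mm' by (cases m, cases m') (auto simp: Cb_inflation_iff Cb_deflation_iff)
  have AA: "fst A' n \<in> A" for n using A mi by (simp add: Cb_sub_def)
  note I = chain_mapD[OF i0(1)] and Q = chain_mapD[OF q0(1)]
  have "\<exists>q' i'. is_pushout E (i0 n) (q0 n) q' i'" for n
    using pushout_exists[OF i0(2) q0(2)] AA I Q by simp
  then obtain P q1 i1 where po: "is_pushout (Cb E) m m' (D, P, q1) (A', P, i1)"
    and pon: "\<And>n. is_pushout E (i0 n) (q0 n) (q1 n) (i1 n)"
    using Cb_pushout_exists[OF i0(1) q0(1)] mi by metis
  have "is_chain_map E D P q1" "is_chain_map E A' P i1"
    using Cb.pushout_square[OF po] mi by simp_all
  moreover have "inflation E Conf (i1 n)" "deflation E Conf (q1 n)" for n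
    using pushout_inflation_deflation[OF i0(2) q0(2) _ _ pon] AA I Q by simp_all
  ultimately show thesis using that po by (simp add: Cb_inflation_iff Cb_deflation_iff)
qed

lemma Cb_pushout_of_A_deflation:
  assumes "inflation (Cb E) (Cb_conf E Conf) m" "deflation (Cb E) (Cb_conf E Conf) m'"
    "src (Cb E) m = src (Cb E) m'" "tgt (Cb E) m' \<in> Cb_sub E A" and po: "is_pushout (Cb E) m m' q' i'"
  shows "inflation (Cb E) (Cb_conf E Conf) i' \<and> deflation (Cb E) (Cb_conf E Conf) q'"
proof -
  obtain q0 i0 where po0: "is_pushout (Cb E) m m' q0 i0" and i0: "inflation (Cb E) (Cb_conf E Conf) i0"
    and q0: "deflation (Cb E) (Cb_conf E Conf) q0"
    by (rule Cb_pushout_of_A_deflation_exists[OF assms(1-4)])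
  obtain w where w: "is_iso (Cb E) w" "src (Cb E) w = tgt (Cb E) q0"
    and wq: "cmp (Cb E) w q0 = q'" and wi: "cmp (Cb E) w i0 = i'"
    by (rule Cb.pushout_unique_iso[OF po po0])
  have "src (Cb E) w = tgt (Cb E) i0" using w(2) Cb.pushout_square[OF po0] by (simp only:)
  then show ?thesis
    using Cb_iso_comp_inflation[OF i0 w(1)] Cb_iso_comp_deflation[OF q0 w] wq wi by (simp only:)
qed

lemma Cb_sub_nonempty: "Cb_sub E A \<noteq> {}"
proof -
  obtain Z where "is_bcomplex E Z" "\<And>n. is_zero_obj E (fst Z n)" using ex_zero_bcomplex by blast
  then have "Z \<in> Cb_sub E A" using zero_obj_mem by (simp add: Cb_sub_def)
  then show ?thesis by blast
qed

lemma Cb_conflation_mem_iff: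
  assumes "(m, m') \<in> Cb_conf E Conf"
  shows "src (Cb E) m' \<in> Cb_sub E A \<longleftrightarrow> src (Cb E) m \<in> Cb_sub E A \<and> tgt (Cb E) m' \<in> Cb_sub E A"
proof -
  obtain X Y Z f g where mm: "m = (X, Y, f)" "m' = (Y, Z, g)" and f: "is_chain_map E X Y f"
    and g: "is_chain_map E Y Z g" and c: "\<And>n. (f n, g n) \<in> Conf"
    using assms by (cases m, cases m') (auto simp: Cb_conf_iff)
  have "fst Y n \<in> A \<longleftrightarrow> fst X n \<in> A \<and> fst Z n \<in> A" for n
    using conflation_mem_iff[OF c[of n]] chain_mapD[OF f] chain_mapD[OF g] by simp
  then show ?thesis
    using mm chain_map_src_bcomplex[OF f] chain_map_src_bcomplex[OF g] chain_map_tgt_bcomplex[OF g]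
    by (auto simp: Cb_sub_def)
qed

lemma Cb_right_percolating: "right_percolating (Cb E) (Cb_conf E Conf) (Cb_sub E A)"
  unfolding right_percolating_def
proof (intro conjI allI impI Cb_sub_nonempty Cb_conflation_mem_iff Cb_deflation_factor
    Cb_inflation_deflation_factor)
  show "Cb_sub E A \<subseteq> obj (Cb E)" by (auto simp: Cb_sub_def)
  show "\<exists>q' i'. is_pushout (Cb E) i q q' i'"
    if "inflation (Cb E) (Cb_conf E Conf) i" "deflation (Cb E) (Cb_conf E Conf) q"
      "src (Cb E) i = src (Cb E) q" "tgt (Cb E) q \<in> Cb_sub E A" for i q
    using Cb_pushout_of_A_deflation_exists[OF that] by blast
qed (use Cb_pushout_of_A_deflation in blast)+

end

theorem proposition4p12:
  fixes E :: "('o, 'm) category" and Conf :: "('m \<times> 'm) set" and A :: "'o set"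
  assumes "right_exact E Conf"
    and "right_percolating E Conf A"
  shows "right_exact (Cb E) (Cb_conf E Conf) \<and>
         right_percolating (Cb E) (Cb_conf E Conf) (Cb_sub E A)"
proof -
  interpret right_percolating_sub E Conf A
    using assms by unfold_locales
  show ?thesis using Cb_right_exact Cb_right_percolating by blast
qed

end
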